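(* A finite-dimensional right $D(S_3)$-module $V$ is inner faithful if and only if $V_6$ or $V_7$ (defined in the context) is isomorphic to a direct summand of $V$.
   Context: Let $\Bbbk=\mathbb{C}$, $\zeta$ a primitive cube root of unity, and $S_3=\langle r,s\mid r^3=s^2=e,\ srs^{-1}=r^{-1}\rangle$. The Drinfeld double $D(G)$ of a finite group $G$ has basis $\{\phi_gh\}$, multiplication $(\phi_g h)(\phi_{g'}h')=\delta_{g,hg'h^{-1}}\phi_g hh'$, comultiplication $\Delta(\phi_gh)=\sum_x\phi_xh\otimes\phi_{x^{-1}g}h$, counit $\epsilon(\phi_gh)=\delta_{g,e}$; it is semisimple over $\mathbb{C}$. A right $D(G)$-module is a $G$-graded vector space $V=\bigoplus_xV_x$ with a right $G$-action such that $V_x\cdot g\subseteq V_{g^{-1}xg}$ ($\phi_x$ acts as projection onto $V_x$); in $V\otimes W$, $V_x\otimes W_y$ has grade $xy$ and $G$ acts diagonally. A module $V$ over a Hopf algebra $H$ is inner faithful if no nonzero Hopf ideal $I$ of $H$ satisfies $VI=0$. The following eight modules form a complete list of pairwise non-isomorphic simple right $D(S_3)$-modules: $V_0$: $u$, grade $e$, $u\cdot r=u$, $u\cdot s=u$. $V_1$: $u$, grade $e$, $u\cdot r=u$, $u\cdot s=-u$. $V_2$: $u,v$ of grade $e$, $u\cdot r=\zeta u$, $u\cdot s=v$, $v\cdot r=\zeta^2v$, $v\cdot s=u$. $V_{3+k}$ for $k=0,1,2$: $u$ of grade $r$, $v$ of grade $r^2$, $u\cdot r=\zeta^ku$, $u\cdot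 s=v$, $v\cdot r=\zeta^{2k}v$, $v\cdot s=u$. $V_6$: $u,v,p$ of grades $s,sr,sr^2$, with $u\cdot r=p$, $v\cdot r=u$, $p\cdot r=v$, $u\cdot s=u$, $v\cdot s=p$, $p\cdot s=v$. $V_7$: same grades and $r$-action as $V_6$, with $u\cdot s=-u$, $v\cdot s=-p$, $p\cdot s=-v$. *)

theory Defs
  imports Complex_Main "Jordan_Normal_Form.Matrix"
begin

text \<open>Elements written in normal form s^j r^i: E = e, R = r, R2 = r^2,
  S = s, SR = s r, SR2 = s r^2.\<close>
datatype s3 = E | R | R2 | S | SR | SR2

instance s3 :: finite
proof
  have "(UNIV :: s3 set) = {E, R, R2, S, SR, SR2}"
    by (auto intro: s3.exhaust)
  moreover have "finite {E, R, R2, S, SR, SR2}" by simp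
  ultimately show "finite (UNIV :: s3 set)" by metis
qed

fun sexp :: "s3 \<Rightarrow> nat" where
  "sexp E = 0" | "sexp R = 0" | "sexp R2 = 0"
| "sexp S = 1" | "sexp SR = 1" | "sexp SR2 = 1"

fun rexp :: "s3 \<Rightarrow> nat" where
  "rexp E = 0" | "rexp R = 1" | "rexp R2 = 2"
| "rexp S = 0" | "rexp SR = 1" | "rexp SR2 = 2"

definition of_exps :: "nat \<Rightarrow> nat \<Rightarrow> s3" where
  "of_exps j i = (if j mod 2 = 0
     then (if i mod 3 = 0 then E else if i mod 3 = 1 then R else R2)
     else (if i mod 3 = 0 then S else if i mod 3 = 1 then SR else SR2))"

text \<open>(s^j r^i)(s^j' r^i') = s^(j+j') r^((-1)^j' i + i'), using r s = s r^(-1).\<close>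
definition s3_mult :: "s3 \<Rightarrow> s3 \<Rightarrow> s3" where
  "s3_mult x y = of_exps (sexp x + sexp y)
     ((if sexp y = 0 then rexp x else 3 - rexp x) + rexp y)"

fun s3_inv :: "s3 \<Rightarrow> s3" where
  "s3_inv E = E" | "s3_inv R = R2" | "s3_inv R2 = R"
| "s3_inv S = S" | "s3_inv SR = SR" | "s3_inv SR2 = SR2"

text \<open>An element of D(S3) is its coefficient vector w.r.t. the basis phi_g h,
  the coefficient of phi_g h being stored at (g,h).\<close>
type_synonym dS3 = "s3 \<times> s3 \<Rightarrow> complex"

text \<open>Elements of D(S3) (x) D(S3), coefficients w.r.t. basis (phi_g h) (x) (phi_g' h').\<close>
type_synonym dS3_tens = "(s3 \<times> s3) \<times> (s3 \<times> s3) \<Rightarrow> complex"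

definition basis_elt :: "s3 \<Rightarrow> s3 \<Rightarrow> dS3" where
  "basis_elt g h = (\<lambda>p. if p = (g, h) then 1 else 0)"

definition d_add :: "dS3 \<Rightarrow> dS3 \<Rightarrow> dS3" where
  "d_add a b = (\<lambda>p. a p + b p)"

definition d_scale :: "complex \<Rightarrow> dS3 \<Rightarrow> dS3" where
  "d_scale c a = (\<lambda>p. c * a p)"

text \<open>(phi_g h)(phi_g' h') = delta(g, h g' h^-1) phi_g (h h'), extended bilinearly.\<close>
definition d_mult :: "dS3 \<Rightarrow> dS3 \<Rightarrow> dS3" where
  "d_mult a b = (\<lambda>(g0, k0). \<Sum>(g, h)\<in>UNIV. \<Sum>(g', h')\<in>UNIV.
      if g = s3_mult (s3_mult h g') (s3_inv h) \<and> g0 = g \<and> k0 = s3_mult h h'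
      then a (g, h) * b (g', h') else 0)"

definition d_unit :: dS3 where
  "d_unit = (\<lambda>(g, h). if h = E then 1 else 0)"

text \<open>Delta(phi_g h) = sum_x phi_x h (x) phi_(x^-1 g) h, extended linearly.\<close>
definition d_comult :: "dS3 \<Rightarrow> dS3_tens" where
  "d_comult a = (\<lambda>((g1, h1), (g2, h2)). \<Sum>(g, h)\<in>UNIV.
      if h1 = h \<and> h2 = h \<and> g2 = s3_mult (s3_inv g1) g then a (g, h) else 0)"

definition d_counit :: "dS3 \<Rightarrow> complex" where
  "d_counit a = (\<Sum>(g, h)\<in>UNIV. if g = E then a (g, h) else 0)"

text \<open>Standard antipode of D(G): S(phi_g h) = h^-1 phi_(g^-1) = phi_(h^-1 g^-1 h) h^-1.\<close>
definition d_antipode :: "dS3 \<Rightarrow> dS3" where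
  "d_antipode a = (\<lambda>(g', h'). \<Sum>(g, h)\<in>UNIV.
      if g' = s3_mult (s3_mult (s3_inv h) (s3_inv g)) h \<and> h' = s3_inv h
      then a (g, h) else 0)"

text \<open>I (x) H + H (x) I: all finite sums of pure tensors a (x) b with a in I or b in I.\<close>
inductive_set tens_sum :: "dS3 set \<Rightarrow> dS3_tens set" for I :: "dS3 set" where
  zero: "(\<lambda>_. 0) \<in> tens_sum I"
| left: "a \<in> I \<Longrightarrow> y \<in> tens_sum I \<Longrightarrow> (\<lambda>(p, q). a p * b q + y (p, q)) \<in> tens_sum I"
| right: "b \<in> I \<Longrightarrow> y \<in> tens_sum I \<Longrightarrow> (\<lambda>(p, q). a p * b q + y (p, q)) \<in> tens_sum I"

definition subspace_d :: "dS3 set \<Rightarrow> bool" where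
  "subspace_d I \<longleftrightarrow> (\<lambda>_. 0) \<in> I \<and> (\<forall>a\<in>I. \<forall>b\<in>I. d_add a b \<in> I)
     \<and> (\<forall>c. \<forall>a\<in>I. d_scale c a \<in> I)"

definition hopf_ideal :: "dS3 set \<Rightarrow> bool" where
  "hopf_ideal I \<longleftrightarrow> subspace_d I
     \<and> (\<forall>a\<in>I. \<forall>b. d_mult a b \<in> I \<and> d_mult b a \<in> I)
     \<and> (\<forall>a\<in>I. d_comult a \<in> tens_sum I)
     \<and> (\<forall>a\<in>I. d_counit a = 0)
     \<and> (\<forall>a\<in>I. d_antipode a \<in> I)"

text \<open>A right D(S3)-module of dimension n: V = C^n (row vectors), v . a = v * act a.
  The right-module axioms (v.(ab) = (v.a).b, v.1 = v, linearity) amount to act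
  being a unital algebra map into n x n matrices.\<close>
definition rmod :: "nat \<Rightarrow> (dS3 \<Rightarrow> complex mat) \<Rightarrow> bool" where
  "rmod n act \<longleftrightarrow> (\<forall>a. act a \<in> carrier_mat n n)
     \<and> (\<forall>a b. act (d_add a b) = act a + act b)
     \<and> (\<forall>c a. act (d_scale c a) = c \<cdot>\<^sub>m act a)
     \<and> (\<forall>a b. act (d_mult a b) = act a * act b)
     \<and> act d_unit = 1\<^sub>m n"

definition inner_faithful :: "nat \<Rightarrow> (dS3 \<Rightarrow> complex mat) \<Rightarrow> bool" where
  "inner_faithful n act \<longleftrightarrow>
     \<not> (\<exists>I. hopf_ideal I \<and> I \<noteq> {\<lambda>_. 0} \<and> (\<forall>a\<in>I. act a = 0\<^sub>m n n))"

text \<open>Module (m, actW) is isomorphic to a direct summand of (n, actV): there are module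
  maps F : W -> V (w |-> w * F) and P : V -> W (v |-> v * P) with P o F = id_W.\<close>
definition iso_to_summand :: "nat \<Rightarrow> (dS3 \<Rightarrow> complex mat) \<Rightarrow> nat \<Rightarrow> (dS3 \<Rightarrow> complex mat) \<Rightarrow> bool" where
  "iso_to_summand m actW n actV \<longleftrightarrow> (\<exists>F P. F \<in> carrier_mat m n \<and> P \<in> carrier_mat n m
     \<and> (\<forall>a. actW a * F = F * actV a) \<and> (\<forall>a. actV a * P = P * actW a)
     \<and> F * P = 1\<^sub>m m)"

text \<open>Module from a grading of the basis vectors and right G-action matrices T
  (row i of T h is the image of the i-th basis vector under h):
  v . (phi_g h) = (proj_g v) . h.\<close>
definition graded_act :: "nat \<Rightarrow> (nat \<Rightarrow> s3) \<Rightarrow> (s3 \<Rightarrow> complex mat) \<Rightarrow> dS3 \<Rightarrow> complex mat" where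
  "graded_act n grade T a = mat n n (\<lambda>(i, j). \<Sum>h\<in>UNIV. a (grade i, h) * (T h $$ (i, j)))"

text \<open>V6, V7: basis u, v, p (indices 0,1,2) of grades s, sr, sr^2.\<close>
fun grade67 :: "nat \<Rightarrow> s3" where
  "grade67 0 = S" | "grade67 (Suc 0) = SR" | "grade67 _ = SR2"

definition Tr67 :: "complex mat" where
  "Tr67 = mat_of_rows_list 3 [[0, 0, 1], [1, 0, 0], [0, 1, 0]]"

definition Ts6 :: "complex mat" where
  "Ts6 = mat_of_rows_list 3 [[1, 0, 0], [0, 0, 1], [0, 1, 0]]"

definition Ts7 :: "complex mat" where
  "Ts7 = mat_of_rows_list 3 [[-1, 0, 0], [0, 0, -1], [0, -1, 0]]"

definition V6 :: "dS3 \<Rightarrow> complex mat" where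
  "V6 = graded_act 3 grade67 (\<lambda>g. (Ts6 ^\<^sub>m sexp g) * (Tr67 ^\<^sub>m rexp g))"

definition V7 :: "dS3 \<Rightarrow> complex mat" where
  "V7 = graded_act 3 grade67 (\<lambda>g. (Ts7 ^\<^sub>m sexp g) * (Tr67 ^\<^sub>m rexp g))"

end

theory Submission
  imports Defs
begin

text \<open>A Hopf ideal is a coideal, so a Hopf ideal annihilating \<open>V\<close> annihilates every tensor
  power of \<open>V\<close>. If \<open>V\<^sub>6\<close> or \<open>V\<^sub>7\<close> is a summand of \<open>V\<close>, products of at most four basis vectors of it
  have any prescribed grade, and since \<open>S\<^sub>3\<close> acts monomially with \<open>h\<close> determined by where it
  sends \<open>e\<^sub>0\<close> and \<open>e\<^sub>1\<close>, these tensors isolate every coefficient of an element of the ideal; so the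
  ideal is zero. Conversely, the \<open>\<phi>\<^sub>g h\<close> with \<open>g\<close> a reflection span a nonzero Hopf ideal, so
  \<open>\<phi>\<^sub>s\<close> acts nontrivially on an inner faithful \<open>V\<close>. Averaging over \<open>\<langle>s\<rangle>\<close> gives a vector \<open>w\<close> of
  grade \<open>s\<close> with \<open>w s = \<epsilon> w\<close>, \<open>\<epsilon> = \<plusminus>1\<close>; then \<open>w, w r\<^sup>2, w r\<close> span a copy of \<open>V\<^sub>6\<close> (\<open>\<epsilon> = 1\<close>) or
  \<open>V\<^sub>7\<close> (\<open>\<epsilon> = -1\<close>), and the same construction on columns gives a complementary projection.\<close>

lemma UNIV_s3: "(UNIV :: s3 set) = {E, R, R2, S, SR, SR2}"
  by (auto intro: s3.exhaust)

lemma sum_UNIV_s3: "(\<Sum>h\<in>UNIV. f h) = f E + f R + f R2 + f S + f SR + f SR2"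
  by (simp add: UNIV_s3 add.assoc)

lemma s3_mult_E [simp]: "s3_mult E x = x" "s3_mult x E = x"
  by (cases x; simp add: s3_mult_def of_exps_def)+

lemma s3_mult_table [simp]:
  "s3_mult R R = R2" "s3_mult R R2 = E" "s3_mult R S = SR2" "s3_mult R SR = S" "s3_mult R SR2 = SR"
  "s3_mult R2 R = E" "s3_mult R2 R2 = R" "s3_mult R2 S = SR" "s3_mult R2 SR = SR2" "s3_mult R2 SR2 = S"
  "s3_mult S R = SR" "s3_mult S R2 = SR2" "s3_mult S S = E" "s3_mult S SR = R" "s3_mult S SR2 = R2"
  "s3_mult SR R = SR2" "s3_mult SR R2 = S" "s3_mult SR S = R2" "s3_mult SR SR = E" "s3_mult SR SR2 = R"
  "s3_mult SR2 R = S" "s3_mult SR2 R2 = SR" "s3_mult SR2 S = R" "s3_mult SR2 SR = R2" "s3_mult SR2 SR2 = E"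
  by (simp_all add: s3_mult_def of_exps_def)

lemma s3_mult_inv_left [simp]: "s3_mult (s3_inv x) x = E"
  and s3_mult_inv_right [simp]: "s3_mult x (s3_inv x) = E"
  by (cases x; simp)+

lemma s3_conj_eq_iff: "g = s3_mult (s3_mult h g') (s3_inv h) \<longleftrightarrow> g' = s3_mult (s3_mult (s3_inv h) g) h"
  by (cases g; cases h; cases g'; simp)

lemma s3_mult_eq_iff: "k = s3_mult h h' \<longleftrightarrow> h' = s3_mult (s3_inv h) k"
  by (cases k; cases h; cases h'; simp)

lemma s3_conj_conj_inv: "s3_mult (s3_mult (s3_inv x) (s3_mult (s3_mult x g) (s3_inv x))) (s3_inv (s3_inv x)) = g"
  by (cases x; cases g; simp)

lemma sum_if_cond_const: "(\<Sum>x\<in>A. if P then f x else 0) = (if P then (\<Sum>x\<in>A. f x) else 0)"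
  by simp

lemma if_conj_zero: "(if A \<and> B then x else 0) = (if A then (if B then x else 0) else 0)"
  by simp

lemma d_mult_apply: "d_mult a b (g0, k0) =
   (\<Sum>h\<in>UNIV. a (g0, h) * b (s3_mult (s3_mult (s3_inv h) g0) h, s3_mult (s3_inv h) k0))"
proof -
  have cond: "(g = s3_mult (s3_mult h g') (s3_inv h) \<and> g0 = g \<and> k0 = s3_mult h h') \<longleftrightarrow>
      (g = g0 \<and> g' = s3_mult (s3_mult (s3_inv h) g0) h \<and> h' = s3_mult (s3_inv h) k0)" for g h g' h'
    using s3_conj_eq_iff s3_mult_eq_iff by blast
  have "d_mult a b (g0, k0) = (\<Sum>g\<in>UNIV. \<Sum>h\<in>UNIV. \<Sum>g'\<in>UNIV. \<Sum>h'\<in>UNIV.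
      if g = g0 then (if g' = s3_mult (s3_mult (s3_inv h) g0) h then (if h' = s3_mult (s3_inv h) k0
      then a (g, h) * b (g', h') else 0) else 0) else 0)"
    unfolding d_mult_def UNIV_Times_UNIV[symmetric] sum.cartesian_product[symmetric]
    by (simp only: case_prod_conv, intro sum.cong refl, subst cond, simp only: if_conj_zero)
  also have "\<dots> = (\<Sum>h\<in>UNIV. a (g0, h) * b (s3_mult (s3_mult (s3_inv h) g0) h, s3_mult (s3_inv h) k0))"
    by (simp only: sum_if_cond_const sum.delta sum.delta' UNIV_I if_True finite_class.finite_UNIV)
  finally show ?thesis .
qed

lemma d_comult_apply: "d_comult a ((g1, h1), (g2, h2)) = (if h1 = h2 then a (s3_mult g1 g2, h1) else 0)"
proof -
  have "g2 = s3_mult (s3_inv g1) g \<longleftrightarrow> g = s3_mult g1 g2" for g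
    by (cases g1; cases g2; cases g; simp)
  then have cond: "(h1 = h \<and> h2 = h \<and> g2 = s3_mult (s3_inv g1) g) \<longleftrightarrow>
      (g = s3_mult g1 g2 \<and> h = h1 \<and> h2 = h1)" for g h
    by blast
  have "d_comult a ((g1, h1), (g2, h2)) = (\<Sum>g\<in>UNIV. \<Sum>h\<in>UNIV.
      if g = s3_mult g1 g2 then (if h = h1 then (if h2 = h1 then a (g, h) else 0) else 0) else 0)"
    unfolding d_comult_def UNIV_Times_UNIV[symmetric] sum.cartesian_product[symmetric]
    by (simp only: case_prod_conv, intro sum.cong refl, subst cond, simp only: if_conj_zero)
  also have "\<dots> = (if h1 = h2 then a (s3_mult g1 g2, h1) else 0)"
    by (simp only: sum_if_cond_const sum.delta sum.delta' UNIV_I if_True finite_class.finite_UNIV) auto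
  finally show ?thesis .
qed

lemma sum_pair_fst_delta: "(\<Sum>p\<in>UNIV. b p * (if fst p = g0 then t (snd p) else 0)) = (\<Sum>h\<in>UNIV. b (g0, h) * t h)"
  for b :: "s3 \<times> s3 \<Rightarrow> complex"
proof -
  have "(\<Sum>p\<in>UNIV. b p * (if fst p = g0 then t (snd p) else 0))
      = (\<Sum>g\<in>UNIV. \<Sum>h\<in>UNIV. if g = g0 then b (g, h) * t h else 0)"
    unfolding UNIV_Times_UNIV[symmetric] sum.cartesian_product
    by (rule sum.cong) (auto split: prod.split)
  also have "\<dots> = (\<Sum>h\<in>UNIV. b (g0, h) * t h)"
    by (simp only: sum_if_cond_const sum.delta sum.delta' UNIV_I if_True finite_class.finite_UNIV)
  finally show ?thesis .
qed

lemma sum_pair_delta: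
  "(\<Sum>q\<in>UNIV. (if h0 = snd q then c (fst q) else 0) * (if fst q = g0 then t (snd q) else 0)) = c g0 * t h0"
  for c :: "s3 \<Rightarrow> complex" and h0 :: s3
proof -
  have "(\<Sum>q\<in>UNIV. (if h0 = snd q then c (fst q) else 0) * (if fst q = g0 then t (snd q) else 0))
      = (\<Sum>g\<in>UNIV. \<Sum>h\<in>UNIV. if g = g0 then (if h = h0 then c g * t h else 0) else 0)"
    unfolding UNIV_Times_UNIV[symmetric] sum.cartesian_product
    by (rule sum.cong) (auto split: prod.split)
  also have "\<dots> = c g0 * t h0"
    by (simp only: sum_if_cond_const sum.delta sum.delta' UNIV_I if_True finite_class.finite_UNIV)
  finally show ?thesis .
qed

section \<open>Coideals annihilate tensor products\<close>

text \<open>\<open>(i, j) \<mapsto> \<Sum>\<^sub>h a(gr i, h) T h i j\<close> is the matrix of \<open>a\<close> on the module with basis \<open>A\<close>,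
  grading \<open>gr\<close> and \<open>S\<^sub>3\<close>-action coefficients \<open>T\<close>, as in \<open>graded_act\<close>.\<close>
definition annihilates :: "dS3 set \<Rightarrow> ('i \<Rightarrow> s3) \<Rightarrow> (s3 \<Rightarrow> 'i \<Rightarrow> 'i \<Rightarrow> complex) \<Rightarrow> 'i set \<Rightarrow> bool" where
  "annihilates I gr T A \<longleftrightarrow> (\<forall>a\<in>I. \<forall>i\<in>A. \<forall>j\<in>A. (\<Sum>h\<in>UNIV. a (gr i, h) * T h i j) = 0)"

lemma annihilatesD:
  "annihilates I gr T A \<Longrightarrow> a \<in> I \<Longrightarrow> i \<in> A \<Longrightarrow> j \<in> A \<Longrightarrow> (\<Sum>h\<in>UNIV. a (gr i, h) * T h i j) = 0"
  unfolding annihilates_def by blast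

lemma tens_sum_bilinear_zero:
  assumes f0: "\<And>b. b \<in> I \<Longrightarrow> (\<Sum>p\<in>UNIV. b p * f p) = 0"
    and g0: "\<And>b. b \<in> I \<Longrightarrow> (\<Sum>q\<in>UNIV. b q * g q) = 0"
    and "y \<in> tens_sum I"
  shows "(\<Sum>p\<in>UNIV. \<Sum>q\<in>UNIV. y (p, q) * f p * g q) = 0"
proof -
  define \<Phi> where "\<Phi> y = (\<Sum>p\<in>UNIV. \<Sum>q\<in>UNIV. y (p, q) * f p * g q)" for y :: dS3_tens
  have \<Phi>_step: "\<Phi> (\<lambda>(p, q). a p * b q + y (p, q)) = (\<Sum>p\<in>UNIV. a p * f p) * (\<Sum>q\<in>UNIV. b q * g q) + \<Phi> y"
    for a b y
    unfolding \<Phi>_def sum_product by (simp add: sum.distrib algebra_simps)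
  have "\<Phi> y = 0"
    using \<open>y \<in> tens_sum I\<close>
  proof induction
    case zero
    then show ?case by (simp add: \<Phi>_def)
  next
    case (left a y b)
    then show ?case by (simp add: \<Phi>_step f0)
  next
    case (right b y a)
    then show ?case by (simp add: \<Phi>_step g0)
  qed
  then show ?thesis
    by (simp add: \<Phi>_def)
qed

lemma d_comult_eval:
  "(\<Sum>p\<in>UNIV. \<Sum>q\<in>UNIV. d_comult a (p, q) * (if fst p = gp then tp (snd p) else 0) *
      (if fst q = gq then tq (snd q) else 0)) = (\<Sum>h\<in>UNIV. a (s3_mult gp gq, h) * (tp h * tq h))"
  (is "?lhs = _")
proof -
  define f where "f p = (if fst p = gp then tp (snd p) else 0)" for p :: "s3 \<times> s3"
  define g where "g q = (if fst q = gq then tq (snd q) else 0)" for q :: "s3 \<times> s3"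
  have "?lhs = (\<Sum>p\<in>UNIV. \<Sum>q\<in>UNIV.
      (if snd p = snd q then a (s3_mult (fst p) (fst q), snd p) else 0) * f p * g q)"
    unfolding f_def[symmetric] g_def[symmetric] by (intro sum.cong refl) (auto simp: d_comult_apply)
  also have "\<dots> = (\<Sum>p\<in>UNIV. f p *
      (\<Sum>q\<in>UNIV. (if snd p = snd q then a (s3_mult (fst p) (fst q), snd p) else 0) * g q))"
    by (simp add: sum_distrib_left algebra_simps)
  also have "\<dots> = (\<Sum>p\<in>UNIV. f p * (a (s3_mult (fst p) gq, snd p) * tq (snd p)))"
    unfolding g_def using sum_pair_delta[of "snd p" "\<lambda>g. a (s3_mult (fst p) g, snd p)" gq tq for p]
    by simp
  also have "\<dots> = (\<Sum>p\<in>UNIV. (a (s3_mult (fst p) gq, snd p) * tq (snd p)) *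
      (if fst p = gp then tp (snd p) else 0))"
    unfolding f_def by (simp add: mult.commute)
  also have "\<dots> = (\<Sum>h\<in>UNIV. (a (s3_mult gp gq, h) * tq h) * tp h)"
    by (rule sum_pair_fst_delta[of "\<lambda>p. a (s3_mult (fst p) gq, snd p) * tq (snd p)", simplified])
  finally show ?thesis
    by (simp add: algebra_simps)
qed

lemma coideal_annihilates_tensor_entry:
  assumes comult: "\<forall>a\<in>I. d_comult a \<in> tens_sum I"
    and ann1: "annihilates I gr1 T1 A" and ann2: "annihilates I gr2 T2 B"
    and a: "a \<in> I" and ij: "i \<in> A" "i' \<in> B" "j \<in> A" "j' \<in> B"
  shows "(\<Sum>h\<in>UNIV. a (s3_mult (gr1 i) (gr2 i'), h) * (T1 h i j * T2 h i' j')) = 0"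
proof -
  have "(\<Sum>p\<in>UNIV. \<Sum>q\<in>UNIV. d_comult a (p, q) * (if fst p = gr1 i then T1 (snd p) i j else 0) *
      (if fst q = gr2 i' then T2 (snd q) i' j' else 0)) = 0"
  proof (rule tens_sum_bilinear_zero)
    show "(\<Sum>p\<in>UNIV. b p * (if fst p = gr1 i then T1 (snd p) i j else 0)) = 0" if "b \<in> I" for b
      using ann1 that ij sum_pair_fst_delta[of b "gr1 i" "\<lambda>h. T1 h i j"] by (simp add: annihilates_def)
    show "(\<Sum>q\<in>UNIV. b q * (if fst q = gr2 i' then T2 (snd q) i' j' else 0)) = 0" if "b \<in> I" for b
      using ann2 that ij sum_pair_fst_delta[of b "gr2 i'" "\<lambda>h. T2 h i' j'"] by (simp add: annihilates_def)
    show "d_comult a \<in> tens_sum I"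
      using comult a by blast
  qed
  then show ?thesis
    using d_comult_eval[where a = a and gp = "gr1 i" and tp = "\<lambda>h. T1 h i j" and gq = "gr2 i'"
        and tq = "\<lambda>h. T2 h i' j'"] by simp
qed

lemma coideal_annihilates_tensor:
  assumes "\<forall>a\<in>I. d_comult a \<in> tens_sum I"
    and "annihilates I gr1 T1 A" and "annihilates I gr2 T2 B"
  shows "annihilates I (\<lambda>(i, i'). s3_mult (gr1 i) (gr2 i')) (\<lambda>h (i, i') (j, j'). T1 h i j * T2 h i' j') (A \<times> B)"
  unfolding annihilates_def using coideal_annihilates_tensor_entry[OF assms] by auto

section \<open>The modules \<open>V\<^sub>6\<close> and \<open>V\<^sub>7\<close>\<close>

definition perm_mat :: "nat \<Rightarrow> (nat \<Rightarrow> nat) \<Rightarrow> complex mat" where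
  "perm_mat n p = mat n n (\<lambda>(i, j). if j = p i then 1 else 0)"

lemma perm_mat_carrier [simp]: "perm_mat n p \<in> carrier_mat n n"
  by (simp add: perm_mat_def)

lemma perm_mat_dim [simp]: "dim_row (perm_mat n p) = n" "dim_col (perm_mat n p) = n"
  by (simp_all add: perm_mat_def)

lemma perm_mat_entry: "i < n \<Longrightarrow> j < n \<Longrightarrow> perm_mat n p $$ (i, j) = (if j = p i then 1 else 0)"
  by (simp add: perm_mat_def)

lemma perm_mat_id: "perm_mat n id = 1\<^sub>m n"
  by (rule eq_matI) (auto simp: perm_mat_def)

lemma perm_mat_mult:
  assumes "\<forall>i<n. p i < n"
  shows "perm_mat n p * perm_mat n q = perm_mat n (q \<circ> p)"
proof (rule eq_matI)
  fix i j assume "i < dim_row (perm_mat n (q \<circ> p))" "j < dim_col (perm_mat n (q \<circ> p))"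
  then have i: "i < n" and j: "j < n" by (auto simp: perm_mat_def)
  have "(perm_mat n p * perm_mat n q) $$ (i, j) =
      (\<Sum>k<n. (if k = p i then 1 else 0) * (if j = q k then 1 else 0))"
    using i j by (simp add: perm_mat_def scalar_prod_def atLeast0LessThan row_def col_def)
  also have "\<dots> = (if j = q (p i) then 1 else 0)"
    using assms i by (simp add: if_distrib[of "\<lambda>x. x * _"] sum.delta cong: if_cong)
  finally show "(perm_mat n p * perm_mat n q) $$ (i, j) = perm_mat n (q \<circ> p) $$ (i, j)"
    using i j by (simp add: perm_mat_def)
qed (auto simp: perm_mat_def)

lemma smult_perm_mat_mult: "(c \<cdot>\<^sub>m perm_mat n p) * perm_mat n q = c \<cdot>\<^sub>m (perm_mat n p * perm_mat n q)"
  by (rule mult_smult_assoc_mat) auto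

definition perm_s :: "nat \<Rightarrow> nat" where
  "perm_s i = (if i = 0 then 0 else if i = 1 then 2 else 1)"

definition perm_r :: "nat \<Rightarrow> nat" where
  "perm_r i = (if i = 0 then 2 else if i = 1 then 0 else 1)"

lemma less_3_iff: "i < (3::nat) \<longleftrightarrow> i = 0 \<or> i = 1 \<or> i = 2"
  by auto

lemma perm_s_less: "\<forall>i<3. perm_s i < 3" and perm_r_less: "\<forall>i<3. perm_r i < 3"
  and perm_r_r_less: "\<forall>i<3. (perm_r \<circ> perm_r) i < 3"
  by (auto simp: perm_s_def perm_r_def)

lemma Ts6_perm_mat: "Ts6 = perm_mat 3 perm_s"
  by (rule eq_matI) (auto simp: Ts6_def perm_mat_def perm_s_def mat_of_rows_list_def less_3_iff)

lemma Ts7_perm_mat: "Ts7 = (-1) \<cdot>\<^sub>m perm_mat 3 perm_s"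
  by (rule eq_matI) (auto simp: Ts7_def perm_mat_def perm_s_def mat_of_rows_list_def less_3_iff)

lemma Tr67_perm_mat: "Tr67 = perm_mat 3 perm_r"
  by (rule eq_matI) (auto simp: Tr67_def perm_mat_def perm_r_def mat_of_rows_list_def less_3_iff)

lemma Tr67_pow:
  "Tr67 ^\<^sub>m 0 = perm_mat 3 id" "Tr67 ^\<^sub>m Suc 0 = perm_mat 3 perm_r"
  "Tr67 ^\<^sub>m 2 = perm_mat 3 (perm_r \<circ> perm_r)"
  by (simp_all add: Tr67_perm_mat perm_mat_id numeral_2_eq_2 perm_mat_mult perm_r_less)

lemma Ts6_pow: "Ts6 ^\<^sub>m 0 = perm_mat 3 id" "Ts6 ^\<^sub>m Suc 0 = perm_mat 3 perm_s"
  by (simp_all add: Ts6_perm_mat perm_mat_id)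

lemma Ts7_pow: "Ts7 ^\<^sub>m 0 = perm_mat 3 id" "Ts7 ^\<^sub>m Suc 0 = (-1) \<cdot>\<^sub>m perm_mat 3 perm_s"
  by (simp_all add: Ts7_perm_mat perm_mat_id)

text \<open>The index of the basis vector \<open>e\<^sub>i \<cdot> h\<close> of \<open>V\<^sub>6\<close> and \<open>V\<^sub>7\<close>; there \<open>e\<^sub>i \<cdot> h = \<epsilon>\<^bsup>sexp h\<^esup> e\<^bsub>act67 i h\<^esub>\<close>
  with \<open>\<epsilon> = 1\<close> resp. \<open>\<epsilon> = -1\<close>.\<close>
fun act67 :: "nat \<Rightarrow> s3 \<Rightarrow> nat" where
  "act67 i E = i"
| "act67 i R = (if i = 0 then 2 else if i = 1 then 0 else 1)"
| "act67 i R2 = (if i = 0 then 1 else if i = 1 then 2 else 0)"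
| "act67 i S = (if i = 0 then 0 else if i = 1 then 2 else 1)"
| "act67 i SR = (if i = 0 then 2 else if i = 1 then 1 else 0)"
| "act67 i SR2 = (if i = 0 then 1 else if i = 1 then 0 else 2)"

definition mono67 :: "complex \<Rightarrow> s3 \<Rightarrow> nat \<Rightarrow> nat \<Rightarrow> complex" where
  "mono67 \<epsilon> h i j = (if j = act67 i h then \<epsilon> ^ sexp h else 0)"

lemma act67_less: "k < 3 \<Longrightarrow> act67 k h < 3"
  by (cases h) auto

lemma act67_mem: "i < 3 \<Longrightarrow> act67 i h \<in> {0, 1, 2}"
  by (cases h) auto

lemma act67_eq_iff: "k < 3 \<Longrightarrow> k' < 3 \<Longrightarrow> act67 k' h = k \<longleftrightarrow> k' = act67 k (s3_inv h)"
  unfolding less_3_iff by (cases h) auto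

lemma grade67_2 [simp]: "grade67 2 = SR2"
  by (simp add: numeral_2_eq_2)

lemma Ts6_Tr67_entry:
  "i < 3 \<Longrightarrow> j < 3 \<Longrightarrow> (Ts6 ^\<^sub>m sexp h * Tr67 ^\<^sub>m rexp h) $$ (i, j) = mono67 1 h i j"
  by (cases h) (simp_all del: pow_mat.simps add: Ts6_pow Tr67_pow perm_mat_mult perm_mat_entry
      mono67_def perm_s_def perm_r_def less_3_iff perm_s_less perm_r_less perm_r_r_less)

lemma Ts7_Tr67_entry:
  "i < 3 \<Longrightarrow> j < 3 \<Longrightarrow> (Ts7 ^\<^sub>m sexp h * Tr67 ^\<^sub>m rexp h) $$ (i, j) = mono67 (-1) h i j"
  by (cases h) (simp_all del: pow_mat.simps add: Ts7_pow Tr67_pow perm_mat_mult perm_mat_entry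
      smult_perm_mat_mult mono67_def perm_s_def perm_r_def less_3_iff perm_s_less perm_r_less perm_r_r_less)

lemma V6_entry: "i < 3 \<Longrightarrow> j < 3 \<Longrightarrow> V6 a $$ (i, j) = (\<Sum>h\<in>UNIV. a (grade67 i, h) * mono67 1 h i j)"
  by (simp add: V6_def graded_act_def Ts6_Tr67_entry)

lemma V7_entry: "i < 3 \<Longrightarrow> j < 3 \<Longrightarrow> V7 a $$ (i, j) = (\<Sum>h\<in>UNIV. a (grade67 i, h) * mono67 (-1) h i j)"
  by (simp add: V7_def graded_act_def Ts7_Tr67_entry)

lemma V6_carrier: "V6 a \<in> carrier_mat 3 3"
  by (simp add: V6_def graded_act_def)

lemma V7_carrier: "V7 a \<in> carrier_mat 3 3"
  by (simp add: V7_def graded_act_def)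

section \<open>A summand \<open>V\<^sub>6\<close> or \<open>V\<^sub>7\<close> makes a module inner faithful\<close>

text \<open>Since \<open>h \<mapsto> (act67 0 h, act67 1 h)\<close> is injective, a tensor containing the factors \<open>e\<^sub>0\<close> and
  \<open>e\<^sub>1\<close> isolates a single coefficient \<open>a(g, h\<^sub>0)\<close>, where \<open>g\<close> is the product of the grades;
  the grades \<open>s, sr, sr\<^sup>2\<close> generate every element of \<open>S\<^sub>3\<close> with at most four factors.\<close>
lemma coideal_annihilating_V67_is_zero:
  assumes comult: "\<forall>a\<in>I. d_comult a \<in> tens_sum I"
    and ann: "annihilates I grade67 (mono67 \<epsilon>) {0, 1, 2}" and "\<epsilon> \<noteq> 0" and a: "a \<in> I"
  shows "a p = 0"
proof -
  note ann2 = coideal_annihilates_tensor[OF comult ann ann]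
  note ann3 = coideal_annihilates_tensor[OF comult ann2 ann]
  note ann4 = coideal_annihilates_tensor[OF comult ann2 ann2]
  note mem = act67_mem[of 0] act67_mem[of 1] act67_mem[of 2]
  obtain g h0 where p: "p = (g, h0)"
    by fastforce
  have "a (g, h0) = 0"
  proof (cases g)
    case E
    have "(\<Sum>h\<in>UNIV. a (E, h) * ((mono67 \<epsilon> h 0 (act67 0 h0) * mono67 \<epsilon> h 1 (act67 1 h0)) *
        (mono67 \<epsilon> h 1 (act67 1 h0) * mono67 \<epsilon> h 0 (act67 0 h0)))) = 0"
      using annihilatesD[OF ann4 a, of "((0, 1), (1, 0))" "((act67 0 h0, act67 1 h0), (act67 1 h0, act67 0 h0))"] mem
      by (simp only: SigmaI insertI1 insertI2 mem_Times_iff) simp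
    then show ?thesis using E \<open>\<epsilon> \<noteq> 0\<close> by (cases h0) (simp_all add: sum_UNIV_s3 mono67_def)
  next
    case R
    have "(\<Sum>h\<in>UNIV. a (R, h) * (mono67 \<epsilon> h 0 (act67 0 h0) * mono67 \<epsilon> h 1 (act67 1 h0))) = 0"
      using annihilatesD[OF ann2 a, of "(0, 1)" "(act67 0 h0, act67 1 h0)"] mem
      by (simp only: SigmaI insertI1 insertI2 mem_Times_iff) simp
    then show ?thesis using R \<open>\<epsilon> \<noteq> 0\<close> by (cases h0) (simp_all add: sum_UNIV_s3 mono67_def)
  next
    case R2
    have "(\<Sum>h\<in>UNIV. a (R2, h) * (mono67 \<epsilon> h 1 (act67 1 h0) * mono67 \<epsilon> h 0 (act67 0 h0))) = 0"
      using annihilatesD[OF ann2 a, of "(1, 0)" "(act67 1 h0, act67 0 h0)"] mem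
      by (simp only: SigmaI insertI1 insertI2 mem_Times_iff) simp
    then show ?thesis using R2 \<open>\<epsilon> \<noteq> 0\<close> by (cases h0) (simp_all add: sum_UNIV_s3 mono67_def)
  next
    case S
    have "(\<Sum>h\<in>UNIV. a (S, h) * ((mono67 \<epsilon> h 0 (act67 0 h0) * mono67 \<epsilon> h 1 (act67 1 h0)) *
        mono67 \<epsilon> h 1 (act67 1 h0))) = 0"
      using annihilatesD[OF ann3 a, of "((0, 1), 1)" "((act67 0 h0, act67 1 h0), act67 1 h0)"] mem
      by (simp only: SigmaI insertI1 insertI2 mem_Times_iff) simp
    then show ?thesis using S \<open>\<epsilon> \<noteq> 0\<close> by (cases h0) (simp_all add: sum_UNIV_s3 mono67_def)
  next
    case SR
    have "(\<Sum>h\<in>UNIV. a (SR, h) * ((mono67 \<epsilon> h 1 (act67 1 h0) * mono67 \<epsilon> h 0 (act67 0 h0)) *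
        mono67 \<epsilon> h 0 (act67 0 h0))) = 0"
      using annihilatesD[OF ann3 a, of "((1, 0), 0)" "((act67 1 h0, act67 0 h0), act67 0 h0)"] mem
      by (simp only: SigmaI insertI1 insertI2 mem_Times_iff) simp
    then show ?thesis using SR \<open>\<epsilon> \<noteq> 0\<close> by (cases h0) (simp_all add: sum_UNIV_s3 mono67_def)
  next
    case SR2
    have "(\<Sum>h\<in>UNIV. a (SR2, h) * ((mono67 \<epsilon> h 2 (act67 2 h0) * mono67 \<epsilon> h 0 (act67 0 h0)) *
        mono67 \<epsilon> h 0 (act67 0 h0))) = 0"
      using annihilatesD[OF ann3 a, of "((2, 0), 0)" "((act67 2 h0, act67 0 h0), act67 0 h0)"] mem
      by (simp only: SigmaI insertI1 insertI2 mem_Times_iff) simp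
    then show ?thesis using SR2 \<open>\<epsilon> \<noteq> 0\<close> by (cases h0) (simp_all add: sum_UNIV_s3 mono67_def)
  qed
  then show ?thesis
    using p by simp
qed

lemma summand_V67_inner_faithful:
  assumes V_carrier: "\<And>a. V a \<in> carrier_mat 3 3"
    and V_entry: "\<And>a i j. i < 3 \<Longrightarrow> j < 3 \<Longrightarrow> V a $$ (i, j) = (\<Sum>h\<in>UNIV. a (grade67 i, h) * mono67 \<epsilon> h i j)"
    and "\<epsilon> \<noteq> 0" and summand: "iso_to_summand 3 V n act"
  shows "inner_faithful n act"
  unfolding inner_faithful_def
proof
  assume "\<exists>I. hopf_ideal I \<and> I \<noteq> {\<lambda>_. 0} \<and> (\<forall>a\<in>I. act a = 0\<^sub>m n n)"
  then obtain I where hopf: "hopf_ideal I" and nonzero: "I \<noteq> {\<lambda>_. 0}" and kill: "\<forall>a\<in>I. act a = 0\<^sub>m n n"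
    by blast
  obtain F P where F: "F \<in> carrier_mat 3 n" and P: "P \<in> carrier_mat n 3"
    and VF: "\<forall>a. V a * F = F * act a" and FP: "F * P = 1\<^sub>m 3"
    using summand unfolding iso_to_summand_def by blast
  have V_zero: "V a = 0\<^sub>m 3 3" if "a \<in> I" for a
  proof -
    have "V a = V a * (F * P)"
      using FP V_carrier[of a] by simp
    also have "\<dots> = (V a * F) * P"
      using V_carrier[of a] F P by (simp add: assoc_mult_mat)
    also have "\<dots> = (F * act a) * P"
      using VF by simp
    also have "\<dots> = 0\<^sub>m 3 3"
      using kill that F P by simp
    finally show ?thesis .
  qed
  have "annihilates I grade67 (mono67 \<epsilon>) {0, 1, 2}"
    unfolding annihilates_def
  proof (intro ballI)
    fix a i j assume "a \<in> I" "i \<in> {0::nat, 1, 2}" "j \<in> {0::nat, 1, 2}"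
    then show "(\<Sum>h\<in>UNIV. a (grade67 i, h) * mono67 \<epsilon> h i j) = 0"
      using V_entry[of i j a] V_zero[of a] by auto
  qed
  moreover have "\<forall>a\<in>I. d_comult a \<in> tens_sum I"
    using hopf unfolding hopf_ideal_def by blast
  ultimately have "a = (\<lambda>_. 0)" if "a \<in> I" for a
    using coideal_annihilating_V67_is_zero[OF _ _ \<open>\<epsilon> \<noteq> 0\<close> that] by auto
  moreover have "(\<lambda>_. 0) \<in> I"
    using hopf unfolding hopf_ideal_def subspace_d_def by blast
  ultimately show False
    using nonzero by blast
qed

section \<open>The Hopf ideal spanned by the reflections\<close>

definition reflection :: "s3 \<Rightarrow> bool" where
  "reflection g \<longleftrightarrow> g = S \<or> g = SR \<or> g = SR2"

definition reflection_ideal :: "dS3 set" where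
  "reflection_ideal = {a. \<forall>g h. \<not> reflection g \<longrightarrow> a (g, h) = 0}"

lemma rotation_conj: "\<not> reflection g \<Longrightarrow> \<not> reflection (s3_mult (s3_mult (s3_inv h) g) h)"
  by (cases g; cases h; simp add: reflection_def)

lemma rotation_antipode:
  "\<not> reflection g' \<Longrightarrow> g' = s3_mult (s3_mult (s3_inv h) (s3_inv g)) h \<Longrightarrow> \<not> reflection g"
  by (cases g; cases h; simp add: reflection_def)

lemma rotation_mult: "\<not> reflection x \<Longrightarrow> \<not> reflection y \<Longrightarrow> \<not> reflection (s3_mult x y)"
  by (cases x; cases y; simp add: reflection_def)

lemma tens_sum_add: "x \<in> tens_sum I \<Longrightarrow> y \<in> tens_sum I \<Longrightarrow> (\<lambda>z. x z + y z) \<in> tens_sum I"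
proof (induction rule: tens_sum.induct)
  case zero
  then show ?case by simp
next
  case (left a x b)
  have "(\<lambda>(p, q). a p * b q + (\<lambda>z. x z + y z) (p, q)) \<in> tens_sum I"
    by (rule tens_sum.left[OF left.hyps(1) left.IH[OF left.prems]])
  then show ?case
    by (simp add: case_prod_beta' algebra_simps)
next
  case (right b x a)
  have "(\<lambda>(p, q). a p * b q + (\<lambda>z. x z + y z) (p, q)) \<in> tens_sum I"
    by (rule tens_sum.right[OF right.hyps(1) right.IH[OF right.prems]])
  then show ?case
    by (simp add: case_prod_beta' algebra_simps)
qed

lemma tens_sum_sum: "finite X \<Longrightarrow> \<forall>x\<in>X. f x \<in> tens_sum I \<Longrightarrow> (\<lambda>z. \<Sum>x\<in>X. f x z) \<in> tens_sum I"
proof (induction rule: finite_induct)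
  case empty
  then show ?case using tens_sum.zero by simp
next
  case (insert x F)
  then show ?case using tens_sum_add[of "f x" I "\<lambda>z. \<Sum>x\<in>F. f x z"] by simp
qed

lemma tens_sum_left: "a \<in> I \<Longrightarrow> (\<lambda>(p, q). a p * b q) \<in> tens_sum I"
  using tens_sum.left[OF _ tens_sum.zero, of a I b] by simp

lemma tens_sum_right: "b \<in> I \<Longrightarrow> (\<lambda>(p, q). a p * b q) \<in> tens_sum I"
  using tens_sum.right[OF _ tens_sum.zero, of b I a] by simp

lemma d_comult_basis_expansion: "d_comult a = (\<lambda>z. \<Sum>t\<in>UNIV. (\<lambda>(p, q). basis_elt (fst t) (snd (snd t)) p *
      (a (s3_mult (fst t) (fst (snd t)), snd (snd t)) * basis_elt (fst (snd t)) (snd (snd t)) q)) z)"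
proof
  fix z :: "(s3 \<times> s3) \<times> s3 \<times> s3"
  obtain g1 h1 g2 h2 where z: "z = ((g1, h1), (g2, h2))"
    by (metis prod.collapse)
  have "(\<Sum>t\<in>UNIV. (\<lambda>(p, q). basis_elt (fst t) (snd (snd t)) p *
      (a (s3_mult (fst t) (fst (snd t)), snd (snd t)) * basis_elt (fst (snd t)) (snd (snd t)) q)) z)
    = (\<Sum>t\<in>UNIV. if t = (g1, g2, h1) then (if h2 = h1 then a (s3_mult g1 g2, h1) else 0) else 0)"
    unfolding z by (rule sum.cong) (auto simp: basis_elt_def)
  also have "\<dots> = d_comult a z"
    by (simp add: z d_comult_apply)
  finally show "d_comult a z = (\<Sum>t\<in>UNIV. (\<lambda>(p, q). basis_elt (fst t) (snd (snd t)) p *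
      (a (s3_mult (fst t) (fst (snd t)), snd (snd t)) * basis_elt (fst (snd t)) (snd (snd t)) q)) z)"
    by simp
qed

lemma d_comult_reflection_ideal: "a \<in> reflection_ideal \<Longrightarrow> d_comult a \<in> tens_sum reflection_ideal"
  unfolding d_comult_basis_expansion
proof (rule tens_sum_sum, simp, rule ballI)
  fix t :: "s3 \<times> s3 \<times> s3"
  assume a: "a \<in> reflection_ideal"
  obtain x y h where t: "t = (x, y, h)"
    by (cases t) auto
  show "(\<lambda>(p, q). basis_elt (fst t) (snd (snd t)) p *
      (a (s3_mult (fst t) (fst (snd t)), snd (snd t)) * basis_elt (fst (snd t)) (snd (snd t)) q))
      \<in> tens_sum reflection_ideal"
  proof (cases "reflection x")
    case True
    then have "basis_elt x h \<in> reflection_ideal"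
      unfolding reflection_ideal_def basis_elt_def by auto
    then show ?thesis
      unfolding t by (simp add: tens_sum_left)
  next
    case False
    then have "(\<lambda>q. a (s3_mult x y, h) * basis_elt y h q) \<in> reflection_ideal"
      using a rotation_mult[OF False, of y] unfolding reflection_ideal_def basis_elt_def by auto
    then show ?thesis
      unfolding t by (simp add: tens_sum_right)
  qed
qed

lemma hopf_ideal_reflection_ideal: "hopf_ideal reflection_ideal"
  unfolding hopf_ideal_def
proof (intro conjI ballI allI)
  show "subspace_d reflection_ideal"
    unfolding subspace_d_def reflection_ideal_def d_add_def d_scale_def by auto
next
  fix a b assume "a \<in> reflection_ideal"
  then have a0: "\<And>g h. \<not> reflection g \<Longrightarrow> a (g, h) = 0"
    unfolding reflection_ideal_def by blast
  show "d_mult a b \<in> reflection_ideal" "d_mult b a \<in> reflection_ideal"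
    unfolding reflection_ideal_def by (simp_all add: d_mult_apply a0 rotation_conj)
next
  fix a assume a: "a \<in> reflection_ideal"
  then have a0: "\<And>g h. \<not> reflection g \<Longrightarrow> a (g, h) = 0"
    unfolding reflection_ideal_def by blast
  show "d_comult a \<in> tens_sum reflection_ideal"
    using a by (rule d_comult_reflection_ideal)
  show "d_counit a = 0"
    unfolding d_counit_def by (rule sum.neutral) (auto simp: a0 reflection_def)
  show "d_antipode a \<in> reflection_ideal"
    unfolding reflection_ideal_def d_antipode_def
  proof clarify
    fix g' h' assume "\<not> reflection g'"
    then show "(\<Sum>(g, h)\<in>UNIV. if g' = s3_mult (s3_mult (s3_inv h) (s3_inv g)) h \<and> h' = s3_inv h
        then a (g, h) else 0) = 0"
      by (intro sum.neutral) (auto simp: a0 dest: rotation_antipode)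
  qed
qed

lemma reflection_ideal_nonzero: "reflection_ideal \<noteq> {\<lambda>_. 0}"
proof
  assume "reflection_ideal = {\<lambda>_. 0}"
  moreover have "basis_elt S E \<in> reflection_ideal"
    unfolding reflection_ideal_def basis_elt_def reflection_def by auto
  ultimately have "basis_elt S E = (\<lambda>_. 0)"
    by blast
  then have "basis_elt S E (S, E) = 0"
    by simp
  then show False
    by (simp add: basis_elt_def)
qed

definition group_elt :: "s3 \<Rightarrow> dS3" where
  "group_elt h = (\<lambda>(g, k). if k = h then 1 else 0)"

lemma s3_inv_mult_eq_iff: "s3_mult (s3_inv h) k0 = k \<longleftrightarrow> k0 = s3_mult h k"
  by (cases h; cases k0; cases k; simp)

lemma sum_delta_mult: "(\<Sum>x\<in>UNIV. (if x = c then 1 else 0) * f x) = f c"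
  for f :: "s3 \<Rightarrow> complex"
  by (simp add: if_distrib[of "\<lambda>x. x * _"] sum.delta cong: if_cong)

lemma d_unit_eq: "d_unit = group_elt E"
  unfolding d_unit_def group_elt_def by simp

lemma d_mult_group_elt: "d_mult (group_elt h) (group_elt k) = group_elt (s3_mult h k)"
proof (intro ext, clarify)
  fix g0 k0
  show "d_mult (group_elt h) (group_elt k) (g0, k0) = group_elt (s3_mult h k) (g0, k0)"
    unfolding d_mult_apply group_elt_def by (simp add: sum_delta_mult s3_inv_mult_eq_iff)
qed

lemma d_mult_proj: "d_mult (basis_elt g E) (basis_elt g' E) = (if g = g' then basis_elt g E else (\<lambda>_. 0))"
proof (intro ext, clarify)
  fix g0 k0
  show "d_mult (basis_elt g E) (basis_elt g' E) (g0, k0) = (if g = g' then basis_elt g E else (\<lambda>_. 0)) (g0, k0)"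
    unfolding d_mult_apply basis_elt_def by (simp add: if_distrib[of "\<lambda>x. x * _"] sum.delta cong: if_cong)
qed

lemma d_mult_group_elt_proj:
  "d_mult (group_elt h) (basis_elt g E) = d_mult (basis_elt (s3_mult (s3_mult h g) (s3_inv h)) E) (group_elt h)"
proof (intro ext, clarify)
  fix g0 k0
  show "d_mult (group_elt h) (basis_elt g E) (g0, k0) =
      d_mult (basis_elt (s3_mult (s3_mult h g) (s3_inv h)) E) (group_elt h) (g0, k0)"
    unfolding d_mult_apply basis_elt_def group_elt_def
    by (simp add: if_distrib[of "\<lambda>x. x * _"] sum.delta cong: if_cong) (auto simp: s3_inv_mult_eq_iff s3_conj_eq_iff)
qed

lemma d_mult_proj_group_elt: "d_mult (basis_elt g E) (group_elt h) = basis_elt g h"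
proof (intro ext, clarify)
  fix g0 k0
  show "d_mult (basis_elt g E) (group_elt h) (g0, k0) = basis_elt g h (g0, k0)"
    unfolding d_mult_apply basis_elt_def group_elt_def
    by (simp add: if_distrib[of "\<lambda>x. x * _"] sum.delta cong: if_cong)
qed

definition proj_reflections :: dS3 where
  "proj_reflections = d_add (basis_elt S E) (d_add (basis_elt SR E) (basis_elt SR2 E))"

lemma d_mult_proj_reflections: "a \<in> reflection_ideal \<Longrightarrow> d_mult proj_reflections a = a"
proof (intro ext, clarify)
  fix g0 k0
  assume "a \<in> reflection_ideal"
  then have a0: "\<And>g h. \<not> reflection g \<Longrightarrow> a (g, h) = 0"
    unfolding reflection_ideal_def by blast
  show "d_mult proj_reflections a (g0, k0) = a (g0, k0)"
    unfolding d_mult_apply proj_reflections_def d_add_def basis_elt_def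
    by (cases g0) (simp_all add: sum_UNIV_s3 a0 reflection_def)
qed

lemma dS3_induct:
  assumes "Q (\<lambda>_. 0)" and "\<And>c g h b. Q b \<Longrightarrow> Q (d_add (d_scale c (basis_elt g h)) b)"
  shows "Q a"
proof -
  have "Q (\<lambda>p. if p \<in> X then a p else 0)" if "finite X" for X
    using that
  proof (induction rule: finite_induct)
    case empty
    then show ?case using assms(1) by simp
  next
    case (insert x X)
    obtain g h where x: "x = (g, h)"
      by (cases x) auto
    have "(\<lambda>p. if p \<in> insert x X then a p else 0) =
        d_add (d_scale (a x) (basis_elt g h)) (\<lambda>p. if p \<in> X then a p else 0)"
      using insert(2) by (auto simp: d_add_def d_scale_def basis_elt_def x)
    then show ?case
      using assms(2)[OF insert(3)] by simp
  qed
  from this[of UNIV] show ?thesis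
    by simp
qed

lemma rmod_carrier: "rmod n act \<Longrightarrow> act a \<in> carrier_mat n n"
  and rmod_add: "rmod n act \<Longrightarrow> act (d_add a b) = act a + act b"
  and rmod_scale: "rmod n act \<Longrightarrow> act (d_scale c a) = c \<cdot>\<^sub>m act a"
  and rmod_mult: "rmod n act \<Longrightarrow> act (d_mult a b) = act a * act b"
  and rmod_unit: "rmod n act \<Longrightarrow> act d_unit = 1\<^sub>m n"
  by (simp_all add: rmod_def)

lemma smult_zero_mat: "(0::complex) \<cdot>\<^sub>m X = 0\<^sub>m (dim_row X) (dim_col X)"
  by (rule eq_matI) auto

lemma rmod_zero: "rmod n act \<Longrightarrow> act (\<lambda>_. 0) = 0\<^sub>m n n"
proof -
  assume rm: "rmod n act"
  have "(\<lambda>_. 0) = d_scale 0 (\<lambda>_. 0 :: complex)"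
    by (simp add: d_scale_def)
  then have "act (\<lambda>_. 0) = 0 \<cdot>\<^sub>m act (\<lambda>_. 0)"
    using rmod_scale[OF rm] by metis
  also have "\<dots> = 0\<^sub>m n n"
    using rmod_carrier[OF rm, of "\<lambda>_. 0"] by (simp add: smult_zero_mat)
  finally show ?thesis .
qed

lemma graded_act_add: "graded_act m gr T (d_add a b) = graded_act m gr T a + graded_act m gr T b"
  by (rule eq_matI) (auto simp: graded_act_def d_add_def sum.distrib algebra_simps)

lemma graded_act_scale: "graded_act m gr T (d_scale c a) = c \<cdot>\<^sub>m graded_act m gr T a"
  by (rule eq_matI) (auto simp: graded_act_def d_scale_def sum_distrib_left algebra_simps)

lemma graded_act_zero: "graded_act m gr T (\<lambda>_. 0) = 0\<^sub>m m m"
  by (rule eq_matI) (auto simp: graded_act_def)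

lemma graded_act_carrier: "graded_act m gr T a \<in> carrier_mat m m"
  by (simp add: graded_act_def)

lemma graded_act_intertwines_left:
  assumes rm: "rmod n act" and F: "F \<in> carrier_mat 3 n"
    and basis: "\<And>g h. graded_act 3 gr T (basis_elt g h) * F = F * act (basis_elt g h)"
  shows "graded_act 3 gr T a * F = F * act a"
proof (induction a rule: dS3_induct)
  case 1
  show ?case using rm F by (simp add: graded_act_zero rmod_zero)
next
  case (2 c g h b)
  let ?V = "graded_act 3 gr T"
  have car: "act x \<in> carrier_mat n n" "?V x \<in> carrier_mat 3 3" for x
    using rm by (simp_all add: rmod_carrier graded_act_carrier)
  have "?V (d_add (d_scale c (basis_elt g h)) b) * F = (c \<cdot>\<^sub>m ?V (basis_elt g h)) * F + ?V b * F"
    using car F by (simp add: graded_act_add graded_act_scale add_mult_distrib_mat[of _ 3 3 _ F n])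
  also have "\<dots> = c \<cdot>\<^sub>m (?V (basis_elt g h) * F) + ?V b * F"
    using car F by (simp add: mult_smult_assoc_mat[of _ 3 3 F n])
  also have "\<dots> = c \<cdot>\<^sub>m (F * act (basis_elt g h)) + F * act b"
    using basis 2 by simp
  also have "\<dots> = F * (c \<cdot>\<^sub>m act (basis_elt g h)) + F * act b"
    using car F by (simp add: mult_smult_distrib[of F 3 n _ n])
  also have "\<dots> = F * act (d_add (d_scale c (basis_elt g h)) b)"
    using car F by (simp add: rmod_add[OF rm] rmod_scale[OF rm] mult_add_distrib_mat[of F 3 n _ n])
  finally show ?case .
qed

lemma graded_act_intertwines_right:
  assumes rm: "rmod n act" and P: "P \<in> carrier_mat n 3"
    and basis: "\<And>g h. act (basis_elt g h) * P = P * graded_act 3 gr T (basis_elt g h)"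
  shows "act a * P = P * graded_act 3 gr T a"
proof (induction a rule: dS3_induct)
  case 1
  show ?case using rm P by (simp add: graded_act_zero rmod_zero)
next
  case (2 c g h b)
  let ?V = "graded_act 3 gr T"
  have car: "act x \<in> carrier_mat n n" "?V x \<in> carrier_mat 3 3" for x
    using rm by (simp_all add: rmod_carrier graded_act_carrier)
  have "act (d_add (d_scale c (basis_elt g h)) b) * P = (c \<cdot>\<^sub>m act (basis_elt g h)) * P + act b * P"
    using car P by (simp add: rmod_add[OF rm] rmod_scale[OF rm] add_mult_distrib_mat[of _ n n _ P 3])
  also have "\<dots> = c \<cdot>\<^sub>m (act (basis_elt g h) * P) + act b * P"
    using car P by (simp add: mult_smult_assoc_mat[of _ n n P 3])
  also have "\<dots> = c \<cdot>\<^sub>m (P * ?V (basis_elt g h)) + P * ?V b"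
    using basis 2 by simp
  also have "\<dots> = P * (c \<cdot>\<^sub>m ?V (basis_elt g h)) + P * ?V b"
    using car P by (simp add: mult_smult_distrib[of P n 3 _ 3])
  also have "\<dots> = P * ?V (d_add (d_scale c (basis_elt g h)) b)"
    using car P by (simp add: graded_act_add graded_act_scale mult_add_distrib_mat[of P n 3 _ 3])
  finally show ?case .
qed

section \<open>Copies of \<open>V\<^sub>6\<close> and \<open>V\<^sub>7\<close> inside a matrix representation\<close>

text \<open>\<open>coset_rep k\<close> conjugates \<open>grade67 k\<close> to \<open>s\<close>, and \<open>coset_rep k \<cdot> h = s_part h \<cdot> coset_rep (act67 k h)\<close>:
  on the translates \<open>w \<cdot> coset_rep k\<close> of an \<open>s\<close>-eigenvector \<open>w\<close> this is the monomial action of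
  \<open>V\<^sub>6\<close> and \<open>V\<^sub>7\<close>.\<close>
fun coset_rep :: "nat \<Rightarrow> s3" where
  "coset_rep 0 = E" | "coset_rep (Suc 0) = R2" | "coset_rep _ = R"

lemma coset_rep_2 [simp]: "coset_rep 2 = R"
  by (simp add: numeral_2_eq_2)

definition s_part :: "s3 \<Rightarrow> s3" where
  "s_part h = (if sexp h = 0 then E else S)"

lemma coset_rep_conj_eq_S_iff:
  "k < 3 \<Longrightarrow> s3_mult (s3_mult (coset_rep k) g) (s3_inv (coset_rep k)) = S \<longleftrightarrow> grade67 k = g"
  unfolding less_3_iff by (cases g) auto

lemma coset_rep_mult: "k < 3 \<Longrightarrow> s3_mult (coset_rep k) h = s3_mult (s_part h) (coset_rep (act67 k h))"
  unfolding less_3_iff by (cases h) (auto simp: s_part_def numeral_2_eq_2)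

lemma mult_inv_coset_rep:
  "k < 3 \<Longrightarrow> s3_mult h (s3_inv (coset_rep k)) = s3_mult (s3_inv (coset_rep (act67 k (s3_inv h)))) (s_part h)"
  unfolding less_3_iff by (cases h) (auto simp: s_part_def numeral_2_eq_2)

lemma coset_rep_conj_S_ne: "k < 3 \<Longrightarrow> k' < 3 \<Longrightarrow> k \<noteq> k' \<Longrightarrow>
   s3_mult (s3_mult (s3_mult (coset_rep k) (s3_inv (coset_rep k'))) S)
     (s3_inv (s3_mult (coset_rep k) (s3_inv (coset_rep k')))) \<noteq> S"
  unfolding less_3_iff by (auto simp: numeral_2_eq_2)

lemma sexp_cases: "sexp h = 0 \<or> sexp h = 1"
  by (cases h) auto

lemma sum_mono67_row: "k < 3 \<Longrightarrow> (\<Sum>k'<3. mono67 \<epsilon> h k k' * f k') = \<epsilon> ^ sexp h * f (act67 k h)"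
  for f :: "nat \<Rightarrow> complex"
proof -
  assume k: "k < 3"
  have "(\<Sum>k'<3. mono67 \<epsilon> h k k' * f k') = (\<Sum>k'<3. if k' = act67 k h then \<epsilon> ^ sexp h * f k' else 0)"
    by (rule sum.cong) (auto simp: mono67_def)
  also have "\<dots> = \<epsilon> ^ sexp h * f (act67 k h)"
    using act67_less[OF k, of h] by (simp add: sum.delta)
  finally show ?thesis .
qed

lemma sum_mono67_col: "k < 3 \<Longrightarrow> (\<Sum>k'<3. f k' * (if grade67 k' = g then mono67 \<epsilon> h k' k else 0))
     = (if grade67 (act67 k (s3_inv h)) = g then \<epsilon> ^ sexp h * f (act67 k (s3_inv h)) else 0)"
  for f :: "nat \<Rightarrow> complex"
proof -
  assume k: "k < 3"
  have "(\<Sum>k'<3. f k' * (if grade67 k' = g then mono67 \<epsilon> h k' k else 0))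
     = (\<Sum>k'<3. if k' = act67 k (s3_inv h) then (if grade67 k' = g then \<epsilon> ^ sexp h * f k' else 0) else 0)"
  proof (rule sum.cong[OF refl])
    fix k' assume "k' \<in> {..<3::nat}"
    then have "k = act67 k' h \<longleftrightarrow> k' = act67 k (s3_inv h)"
      using act67_eq_iff[OF k, of k' h] by auto
    then show "f k' * (if grade67 k' = g then mono67 \<epsilon> h k' k else 0) =
      (if k' = act67 k (s3_inv h) then (if grade67 k' = g then \<epsilon> ^ sexp h * f k' else 0) else 0)"
      by (auto simp: mono67_def)
  qed
  also have "\<dots> = (if grade67 (act67 k (s3_inv h)) = g then \<epsilon> ^ sexp h * f (act67 k (s3_inv h)) else 0)"
    using act67_less[OF k, of "s3_inv h"] by (simp add: sum.delta)
  finally show ?thesis .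
qed

definition phi_mat67 :: "complex \<Rightarrow> s3 \<Rightarrow> s3 \<Rightarrow> complex mat" where
  "phi_mat67 \<epsilon> g h = mat 3 3 (\<lambda>(k, k'). if grade67 k = g then mono67 \<epsilon> h k k' else 0)"

lemma nonzero_mat_entry:
  assumes "X \<in> carrier_mat n m" "X \<noteq> 0\<^sub>m n m"
  obtains i j where "i < n" "j < m" "X $$ (i, j) \<noteq> 0"
proof -
  have "\<exists>i j. i < n \<and> j < m \<and> X $$ (i, j) \<noteq> 0"
  proof (rule ccontr)
    assume "\<not> ?thesis"
    then have "X = 0\<^sub>m n m"
      using assms(1) by (intro eq_matI) auto
    with assms(2) show False ..
  qed
  then show thesis
    using that by blast
qed

lemma diag_unit_mult_entry:
  fixes X :: "'a :: semiring_1 mat"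
  assumes "X \<in> carrier_mat n m" "i < n" "j < m"
  shows "(mat n n (\<lambda>(r, s). if r = i \<and> s = i then 1 else 0) * X) $$ (i, j) = X $$ (i, j)"
proof -
  have "(mat n n (\<lambda>(r, s). if r = i \<and> s = i then 1 else 0) * X) $$ (i, j) =
      (\<Sum>r\<in>{0..<n}. (if r = i then 1 else 0) * X $$ (r, j))"
    using assms by (simp add: scalar_prod_def row_def col_def)
  also have "\<dots> = X $$ (i, j)"
    using assms(2) by (simp add: if_distrib[of "\<lambda>x. x * _"] sum.delta cong: if_cong)
  finally show ?thesis .
qed

lemma mult_scaled_unit_entry:
  fixes w :: "'a :: field mat"
  assumes "w \<in> carrier_mat n n" "i < n" "j < n" "w $$ (i, j) \<noteq> 0"
  shows "(w * mat n n (\<lambda>(r, s). if r = j \<and> s = i then 1 / w $$ (i, j) else 0)) $$ (i, i) = 1"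
proof -
  have "(w * mat n n (\<lambda>(r, s). if r = j \<and> s = i then 1 / w $$ (i, j) else 0)) $$ (i, i) =
      (\<Sum>r\<in>{0..<n}. w $$ (i, r) * (if r = j then 1 / w $$ (i, j) else 0))"
    using assms by (simp add: scalar_prod_def row_def col_def)
  also have "\<dots> = 1"
    using assms(3,4) by (simp add: if_distrib[of "\<lambda>x. _ * x"] sum.delta' cong: if_cong)
  finally show ?thesis .
qed

text \<open>\<open>A h\<close> and \<open>Pg g\<close> are the actions of \<open>h\<close> and \<open>\<phi>\<^sub>g\<close> on a right \<open>D(S\<^sub>3)\<close>-module.\<close>
locale dS3_mat_rep =
  fixes n :: nat and A :: "s3 \<Rightarrow> complex mat" and Pg :: "s3 \<Rightarrow> complex mat"
  assumes A_carrier [simp]: "\<And>h. A h \<in> carrier_mat n n"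
    and Pg_carrier [simp]: "\<And>g. Pg g \<in> carrier_mat n n"
    and A_mult: "\<And>h k. A h * A k = A (s3_mult h k)"
    and A_E: "A E = 1\<^sub>m n"
    and Pg_mult: "\<And>g g'. Pg g * Pg g' = (if g = g' then Pg g else 0\<^sub>m n n)"
    and A_Pg: "\<And>h g. A h * Pg g = Pg (s3_mult (s3_mult h g) (s3_inv h)) * A h"
begin

lemma mult_assoc_n:
  "X \<in> carrier_mat n n \<Longrightarrow> Y \<in> carrier_mat n n \<Longrightarrow> Z \<in> carrier_mat n n \<Longrightarrow> X * Y * Z = X * (Y * Z)"
  by (rule assoc_mult_mat) auto

lemma mult_carrier_n [simp]: "X \<in> carrier_mat n n \<Longrightarrow> Y \<in> carrier_mat n n \<Longrightarrow> X * Y \<in> carrier_mat n n"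
  by simp

lemma mult_zero_n [simp]:
  "(X :: complex mat) \<in> carrier_mat n n \<Longrightarrow> X * 0\<^sub>m n n = 0\<^sub>m n n"
  "(X :: complex mat) \<in> carrier_mat n n \<Longrightarrow> 0\<^sub>m n n * X = 0\<^sub>m n n"
  by simp_all

lemma mult_one_n [simp]:
  "(X :: complex mat) \<in> carrier_mat n n \<Longrightarrow> X * 1\<^sub>m n = X"
  "(X :: complex mat) \<in> carrier_mat n n \<Longrightarrow> 1\<^sub>m n * X = X"
  by simp_all

lemma smult_one [simp]: "(1::complex) \<cdot>\<^sub>m X = X"
  by (rule eq_matI) auto

lemma dim_n [simp]: "X \<in> carrier_mat n n \<Longrightarrow> dim_row X = n" "X \<in> carrier_mat n n \<Longrightarrow> dim_col X = n"
  by auto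

lemma add_mult_n:
  "X \<in> carrier_mat n n \<Longrightarrow> Y \<in> carrier_mat n n \<Longrightarrow> Z \<in> carrier_mat n n \<Longrightarrow> (X + Y) * Z = X * Z + Y * Z"
  by (rule add_mult_distrib_mat) auto

lemma mult_add_n:
  "X \<in> carrier_mat n n \<Longrightarrow> Y \<in> carrier_mat n n \<Longrightarrow> Z \<in> carrier_mat n n \<Longrightarrow> X * (Y + Z) = X * Y + X * Z"
  by (rule mult_add_distrib_mat) auto

lemma smult_mult_n: "(X :: complex mat) \<in> carrier_mat n n \<Longrightarrow> Y \<in> carrier_mat n n \<Longrightarrow> (c \<cdot>\<^sub>m X) * Y = c \<cdot>\<^sub>m (X * Y)"
  by (rule mult_smult_assoc_mat) auto

lemma mult_smult_n: "(X :: complex mat) \<in> carrier_mat n n \<Longrightarrow> Y \<in> carrier_mat n n \<Longrightarrow> X * (c \<cdot>\<^sub>m Y) = c \<cdot>\<^sub>m (X * Y)"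
  by (rule mult_smult_distrib) auto

lemma A_mult_left: "X \<in> carrier_mat n n \<Longrightarrow> A h * (A k * X) = A (s3_mult h k) * X"
  by (simp add: mult_assoc_n[symmetric] A_mult)

lemma Pg_mult_left: "X \<in> carrier_mat n n \<Longrightarrow> Pg g * (Pg g' * X) = (if g = g' then Pg g * X else 0\<^sub>m n n)"
  by (simp add: mult_assoc_n[symmetric] Pg_mult)

lemma A_Pg_left: "X \<in> carrier_mat n n \<Longrightarrow> A h * (Pg g * X) = Pg (s3_mult (s3_mult h g) (s3_inv h)) * (A h * X)"
  by (simp add: mult_assoc_n[symmetric] A_Pg)

lemma A_S_Pg_S: "A S * Pg S = Pg S * A S"
  using A_Pg[of S S] by simp

lemma A_S_Pg_S_left: "X \<in> carrier_mat n n \<Longrightarrow> A S * (Pg S * X) = Pg S * (A S * X)"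
  by (simp add: mult_assoc_n[symmetric] A_S_Pg_S)

lemma A_S_A_S_left: "X \<in> carrier_mat n n \<Longrightarrow> A S * (A S * X) = X"
  by (simp add: A_mult_left A_E)

lemma Pg_conj: "Pg (s3_mult (s3_mult h g) (s3_inv h)) = A h * Pg g * A (s3_inv h)"
proof -
  have "A h * Pg g * A (s3_inv h) = Pg (s3_mult (s3_mult h g) (s3_inv h)) * (A h * A (s3_inv h))"
    by (simp add: A_Pg mult_assoc_n)
  then show ?thesis
    by (simp add: A_mult A_E)
qed

lemma row_Pg:
  assumes w: "w \<in> carrier_mat n n" and wS: "w * Pg S = w"
  shows "w * Pg g = (if g = S then w else 0\<^sub>m n n)"
proof -
  have "w * Pg g = w * Pg S * Pg g"
    using wS by simp
  also have "\<dots> = w * (Pg S * Pg g)"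
    using w by (simp add: mult_assoc_n)
  also have "\<dots> = (if g = S then w * Pg S else 0\<^sub>m n n)"
    using w by (cases "g = S") (simp_all add: Pg_mult)
  also have "\<dots> = (if g = S then w else 0\<^sub>m n n)"
    using wS by simp
  finally show ?thesis .
qed

lemma Pg_col:
  assumes Q: "Q \<in> carrier_mat n n" and QS: "Pg S * Q = Q"
  shows "Pg g * Q = (if g = S then Q else 0\<^sub>m n n)"
proof -
  have "Pg g * Q = Pg g * (Pg S * Q)"
    using QS by simp
  also have "\<dots> = (if g = S then Pg g * Q else 0\<^sub>m n n)"
    using Q by (rule Pg_mult_left)
  also have "\<dots> = (if g = S then Q else 0\<^sub>m n n)"
    using QS by simp
  finally show ?thesis .
qed

definition rows67 :: "complex mat \<Rightarrow> nat \<Rightarrow> complex mat" where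
  "rows67 w i = mat 3 n (\<lambda>(k, l). (w * A (coset_rep k)) $$ (i, l))"

definition cols67 :: "complex mat \<Rightarrow> nat \<Rightarrow> complex mat" where
  "cols67 Q i = mat n 3 (\<lambda>(r, k). (A (s3_inv (coset_rep k)) * Q) $$ (r, i))"

lemma rows67_carrier: "rows67 w i \<in> carrier_mat 3 n"
  by (simp add: rows67_def)

lemma cols67_carrier: "cols67 Q i \<in> carrier_mat n 3"
  by (simp add: cols67_def)

lemma rows67_mult_entry:
  assumes "w \<in> carrier_mat n n" "X \<in> carrier_mat n m" "i < n" "k < 3" "l < m"
  shows "(rows67 w i * X) $$ (k, l) = (w * A (coset_rep k) * X) $$ (i, l)"
proof -
  have entry: "(mat 3 n (\<lambda>(k, l). W k $$ (i, l)) * X) $$ (k, l) = (W k * X) $$ (i, l)"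
    if "W k \<in> carrier_mat n n" for W :: "nat \<Rightarrow> complex mat"
    using that assms by (simp add: scalar_prod_def row_def col_def)
  show ?thesis
    unfolding rows67_def by (rule entry) (use assms(1) in simp)
qed

lemma mult_cols67_entry:
  assumes "Q \<in> carrier_mat n n" "X \<in> carrier_mat m n" "i < n" "r < m" "k < 3"
  shows "(X * cols67 Q i) $$ (r, k) = (X * (A (s3_inv (coset_rep k)) * Q)) $$ (r, i)"
proof -
  have entry: "(X * mat n 3 (\<lambda>(r, k). Q' k $$ (r, i))) $$ (r, k) = (X * Q' k) $$ (r, i)"
    if "Q' k \<in> carrier_mat n n" for Q' :: "nat \<Rightarrow> complex mat"
    using that assms by (simp add: scalar_prod_def row_def col_def)
  show ?thesis
    unfolding cols67_def by (rule entry) (use assms(1) in simp)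
qed

lemma row_translate_Pg:
  assumes w: "w \<in> carrier_mat n n" and wS: "w * Pg S = w" and k: "k < 3"
  shows "w * A (coset_rep k) * Pg g = (if grade67 k = g then w * A (coset_rep k) else 0\<^sub>m n n)"
proof -
  have "w * A (coset_rep k) * Pg g =
      (w * Pg (s3_mult (s3_mult (coset_rep k) g) (s3_inv (coset_rep k)))) * A (coset_rep k)"
    using w by (simp add: mult_assoc_n A_Pg)
  then show ?thesis
    using w by (simp add: row_Pg[OF w wS] coset_rep_conj_eq_S_iff[OF k])
qed

lemma row_translate_A:
  assumes w: "w \<in> carrier_mat n n" and ws: "w * A S = \<epsilon> \<cdot>\<^sub>m w" and k: "k < 3"
  shows "w * A (coset_rep k) * A h = \<epsilon> ^ sexp h \<cdot>\<^sub>m (w * A (coset_rep (act67 k h)))"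
proof -
  have w_s_part: "w * A (s_part h) = \<epsilon> ^ sexp h \<cdot>\<^sub>m w"
    using sexp_cases[of h] w by (auto simp: s_part_def ws A_E)
  have "w * A (coset_rep k) * A h = (w * A (s_part h)) * A (coset_rep (act67 k h))"
    using w by (simp add: mult_assoc_n A_mult coset_rep_mult[OF k])
  then show ?thesis
    using w by (simp add: w_s_part smult_mult_n)
qed

lemma Pg_col_translate:
  assumes Q: "Q \<in> carrier_mat n n" and QS: "Pg S * Q = Q" and k: "k < 3"
  shows "Pg g * (A (s3_inv (coset_rep k)) * Q) =
    (if grade67 k = g then A (s3_inv (coset_rep k)) * Q else 0\<^sub>m n n)"
proof -
  have "Pg g * A (s3_inv (coset_rep k)) =
      A (s3_inv (coset_rep k)) * Pg (s3_mult (s3_mult (coset_rep k) g) (s3_inv (coset_rep k)))"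
    using A_Pg[of "s3_inv (coset_rep k)" "s3_mult (s3_mult (coset_rep k) g) (s3_inv (coset_rep k))"]
    by (simp only: s3_conj_conj_inv)
  then have "Pg g * (A (s3_inv (coset_rep k)) * Q) =
      A (s3_inv (coset_rep k)) * (Pg (s3_mult (s3_mult (coset_rep k) g) (s3_inv (coset_rep k))) * Q)"
    using Q by (simp add: mult_assoc_n[symmetric])
  then show ?thesis
    using Q by (simp add: Pg_col[OF Q QS] coset_rep_conj_eq_S_iff[OF k])
qed

lemma A_col_translate:
  assumes Q: "Q \<in> carrier_mat n n" and Qs: "A S * Q = \<epsilon> \<cdot>\<^sub>m Q" and k: "k < 3"
  shows "A h * (A (s3_inv (coset_rep k)) * Q) =
    \<epsilon> ^ sexp h \<cdot>\<^sub>m (A (s3_inv (coset_rep (act67 k (s3_inv h)))) * Q)"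
proof -
  have s_part_Q: "A (s_part h) * Q = \<epsilon> ^ sexp h \<cdot>\<^sub>m Q"
    using sexp_cases[of h] Q by (auto simp: s_part_def Qs A_E)
  have "A h * (A (s3_inv (coset_rep k)) * Q) =
      A (s3_inv (coset_rep (act67 k (s3_inv h)))) * (A (s_part h) * Q)"
    using Q by (simp add: A_mult_left mult_inv_coset_rep[OF k])
  then show ?thesis
    using Q by (simp add: s_part_Q mult_smult_n)
qed

lemma rows67_intertwines:
  assumes w: "w \<in> carrier_mat n n" and wS: "w * Pg S = w" and ws: "w * A S = \<epsilon> \<cdot>\<^sub>m w" and i: "i < n"
  shows "phi_mat67 \<epsilon> g h * rows67 w i = rows67 w i * (Pg g * A h)"
proof (rule eq_matI)
  define W where "W k = w * A (coset_rep k)" for k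
  fix k l assume "k < dim_row (rows67 w i * (Pg g * A h))" "l < dim_col (rows67 w i * (Pg g * A h))"
  then have k: "k < 3" and l: "l < n"
    by (auto simp: rows67_def)
  have "(phi_mat67 \<epsilon> g h * rows67 w i) $$ (k, l) =
      (\<Sum>k'<3. (if grade67 k = g then mono67 \<epsilon> h k k' else 0) * W k' $$ (i, l))"
    using k l by (simp add: phi_mat67_def rows67_def W_def scalar_prod_def row_def col_def atLeast0LessThan)
  also have "\<dots> = (if grade67 k = g then \<epsilon> ^ sexp h * W (act67 k h) $$ (i, l) else 0)"
    using sum_mono67_row[OF k, of \<epsilon> h "\<lambda>k'. W k' $$ (i, l)"] by auto
  also have "\<dots> = ((W k * Pg g) * A h) $$ (i, l)"
  proof -
    have "(W k * Pg g) * A h = (if grade67 k = g then \<epsilon> ^ sexp h \<cdot>\<^sub>m W (act67 k h) else 0\<^sub>m n n)"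
      unfolding W_def using w
      by (cases "grade67 k = g") (simp_all add: row_translate_Pg[OF w wS k] row_translate_A[OF w ws k])
    moreover have "W k' \<in> carrier_mat n n" for k'
      using w by (simp add: W_def)
    ultimately show ?thesis
      using i l by simp
  qed
  also have "(W k * Pg g) * A h = W k * (Pg g * A h)"
    using w by (simp add: W_def mult_assoc_n)
  also have "(W k * (Pg g * A h)) $$ (i, l) = (rows67 w i * (Pg g * A h)) $$ (k, l)"
    unfolding W_def by (rule rows67_mult_entry[OF w _ i k l, symmetric]) simp
  finally show "(phi_mat67 \<epsilon> g h * rows67 w i) $$ (k, l) = (rows67 w i * (Pg g * A h)) $$ (k, l)" .
qed (auto simp: phi_mat67_def rows67_def)

lemma cols67_intertwines:
  assumes Q: "Q \<in> carrier_mat n n" and QS: "Pg S * Q = Q" and Qs: "A S * Q = \<epsilon> \<cdot>\<^sub>m Q" and i: "i < n"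
  shows "Pg g * A h * cols67 Q i = cols67 Q i * phi_mat67 \<epsilon> g h"
proof (rule eq_matI)
  define Q' where "Q' k = A (s3_inv (coset_rep k)) * Q" for k
  fix r k assume "r < dim_row (cols67 Q i * phi_mat67 \<epsilon> g h)" "k < dim_col (cols67 Q i * phi_mat67 \<epsilon> g h)"
  then have r: "r < n" and k: "k < 3"
    by (auto simp: phi_mat67_def cols67_def)
  let ?k' = "act67 k (s3_inv h)"
  have "(Pg g * A h * cols67 Q i) $$ (r, k) = (Pg g * A h * Q' k) $$ (r, i)"
    unfolding Q'_def by (rule mult_cols67_entry[OF Q _ i r k]) simp
  also have "Pg g * A h * Q' k = Pg g * (A h * Q' k)"
    using Q by (simp add: Q'_def mult_assoc_n)
  also have "\<dots> = (if grade67 ?k' = g then \<epsilon> ^ sexp h \<cdot>\<^sub>m Q' ?k' else 0\<^sub>m n n)"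
    using Q by (simp add: Q'_def A_col_translate[OF Q Qs k] mult_smult_n
        Pg_col_translate[OF Q QS act67_less[OF k]])
  also have "\<dots> $$ (r, i) = (if grade67 ?k' = g then \<epsilon> ^ sexp h * Q' ?k' $$ (r, i) else 0)"
    using Q r i by (simp add: Q'_def)
  also have "\<dots> = (\<Sum>k'<3. Q' k' $$ (r, i) * (if grade67 k' = g then mono67 \<epsilon> h k' k else 0))"
    using sum_mono67_col[OF k, of "\<lambda>k'. Q' k' $$ (r, i)" g \<epsilon> h] by simp
  also have "\<dots> = (cols67 Q i * phi_mat67 \<epsilon> g h) $$ (r, k)"
    using r k by (simp add: phi_mat67_def cols67_def Q'_def scalar_prod_def row_def col_def atLeast0LessThan)
  finally show "(Pg g * A h * cols67 Q i) $$ (r, k) = (cols67 Q i * phi_mat67 \<epsilon> g h) $$ (r, k)" .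
qed (auto simp: phi_mat67_def cols67_def)

text \<open>Distinct translates \<open>w \<cdot> coset_rep k\<close> and \<open>coset_rep k'\<^sup>-\<^sup>1 \<cdot> Q\<close> are orthogonal because they
  have different grades.\<close>
lemma rows67_mult_cols67:
  assumes w: "w \<in> carrier_mat n n" and wS: "w * Pg S = w"
    and Q: "Q \<in> carrier_mat n n" and QS: "Pg S * Q = Q"
    and i: "i < n" and wQ: "(w * Q) $$ (i, i) = 1"
  shows "rows67 w i * cols67 Q i = 1\<^sub>m 3"
proof (rule eq_matI)
  fix k k' assume "k < dim_row (1\<^sub>m 3 :: complex mat)" "k' < dim_col (1\<^sub>m 3 :: complex mat)"
  then have k: "k < 3" and k': "k' < 3"
    by auto
  have "(rows67 w i * cols67 Q i) $$ (k, k') = (w * A (coset_rep k) * cols67 Q i) $$ (i, k')"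
    using rows67_mult_entry[OF w cols67_carrier i k k'] .
  also have "\<dots> = (w * A (coset_rep k) * (A (s3_inv (coset_rep k')) * Q)) $$ (i, i)"
    by (rule mult_cols67_entry[OF Q _ i i k']) (use w in simp)
  also have "w * A (coset_rep k) * (A (s3_inv (coset_rep k')) * Q) =
      w * (A (s3_mult (coset_rep k) (s3_inv (coset_rep k'))) * Q)"
    using w Q by (simp add: mult_assoc_n A_mult_left)
  also have "\<dots> = (if k = k' then w * Q else 0\<^sub>m n n)"
  proof (cases "k = k'")
    case True
    then show ?thesis
      using w Q by (simp add: A_E)
  next
    case False
    define x where "x = s3_mult (coset_rep k) (s3_inv (coset_rep k'))"
    have "w * (A x * Q) = w * (A x * (Pg S * Q))"
      using QS by simp
    also have "\<dots> = (w * Pg (s3_mult (s3_mult x S) (s3_inv x))) * (A x * Q)"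
      using w Q by (simp add: A_Pg_left mult_assoc_n)
    also have "\<dots> = 0\<^sub>m n n"
      using coset_rep_conj_S_ne[OF k k' False] w Q by (simp add: row_Pg[OF w wS] x_def)
    finally show ?thesis
      using False by (simp add: x_def)
  qed
  also have "\<dots> $$ (i, i) = 1\<^sub>m 3 $$ (k, k')"
    using wQ i k k' by (cases "k = k'") simp_all
  finally show "(rows67 w i * cols67 Q i) $$ (k, k') = 1\<^sub>m 3 $$ (k, k')" .
qed (simp_all add: rows67_def cols67_def)

lemma s_average_row:
  assumes u: "u \<in> carrier_mat n n" and uS: "u * Pg S = u" and e2: "\<epsilon> * \<epsilon> = 1"
  shows "(u + \<epsilon> \<cdot>\<^sub>m (u * A S)) * Pg S = u + \<epsilon> \<cdot>\<^sub>m (u * A S)"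
    and "(u + \<epsilon> \<cdot>\<^sub>m (u * A S)) * A S = \<epsilon> \<cdot>\<^sub>m (u + \<epsilon> \<cdot>\<^sub>m (u * A S))"
proof -
  have "(u + \<epsilon> \<cdot>\<^sub>m (u * A S)) * Pg S = u * Pg S + \<epsilon> \<cdot>\<^sub>m (u * (A S * Pg S))"
    using u by (simp add: add_mult_n smult_mult_n mult_assoc_n)
  also have "\<dots> = u + \<epsilon> \<cdot>\<^sub>m (u * A S)"
    using u uS by (simp add: A_S_Pg_S mult_assoc_n[symmetric])
  finally show "(u + \<epsilon> \<cdot>\<^sub>m (u * A S)) * Pg S = u + \<epsilon> \<cdot>\<^sub>m (u * A S)" .
  have "(u + \<epsilon> \<cdot>\<^sub>m (u * A S)) * A S = u * A S + \<epsilon> \<cdot>\<^sub>m u"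
    using u by (simp add: add_mult_n smult_mult_n mult_assoc_n A_mult A_E)
  also have "\<dots> = \<epsilon> \<cdot>\<^sub>m (u + \<epsilon> \<cdot>\<^sub>m (u * A S))"
    using u e2
    by (subst add_smult_distrib_left_mat[of _ n n]) (auto simp: smult_smult_assoc comm_add_mat[of _ n n])
  finally show "(u + \<epsilon> \<cdot>\<^sub>m (u * A S)) * A S = \<epsilon> \<cdot>\<^sub>m (u + \<epsilon> \<cdot>\<^sub>m (u * A S))" .
qed

lemma s_average_col:
  assumes C: "C \<in> carrier_mat n n" and SC: "Pg S * C = C" and e2: "\<epsilon> * \<epsilon> = 1"
  shows "Pg S * ((1/2) \<cdot>\<^sub>m (C + \<epsilon> \<cdot>\<^sub>m (A S * C))) = (1/2) \<cdot>\<^sub>m (C + \<epsilon> \<cdot>\<^sub>m (A S * C))"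
    and "A S * ((1/2) \<cdot>\<^sub>m (C + \<epsilon> \<cdot>\<^sub>m (A S * C))) = \<epsilon> \<cdot>\<^sub>m ((1/2) \<cdot>\<^sub>m (C + \<epsilon> \<cdot>\<^sub>m (A S * C)))"
proof -
  have "Pg S * (A S * C) = A S * C"
    using C SC by (simp add: A_S_Pg_S_left[symmetric])
  then show "Pg S * ((1/2) \<cdot>\<^sub>m (C + \<epsilon> \<cdot>\<^sub>m (A S * C))) = (1/2) \<cdot>\<^sub>m (C + \<epsilon> \<cdot>\<^sub>m (A S * C))"
    using C SC by (simp add: mult_smult_n mult_add_n)
  have "A S * ((1/2) \<cdot>\<^sub>m (C + \<epsilon> \<cdot>\<^sub>m (A S * C))) = (1/2) \<cdot>\<^sub>m (A S * C + \<epsilon> \<cdot>\<^sub>m C)"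
    using C by (simp add: mult_smult_n mult_add_n A_S_A_S_left)
  also have "\<dots> = \<epsilon> \<cdot>\<^sub>m ((1/2) \<cdot>\<^sub>m (C + \<epsilon> \<cdot>\<^sub>m (A S * C)))"
    using C e2
    by (auto simp: add_smult_distrib_left_mat[of _ n n] smult_smult_assoc comm_add_mat[of _ n n] mult.commute)
  finally show "A S * ((1/2) \<cdot>\<^sub>m (C + \<epsilon> \<cdot>\<^sub>m (A S * C))) = \<epsilon> \<cdot>\<^sub>m ((1/2) \<cdot>\<^sub>m (C + \<epsilon> \<cdot>\<^sub>m (A S * C)))" .
qed

text \<open>For a row \<open>u\<close> fixed by \<open>\<phi>\<^sub>s\<close>, \<open>u + \<epsilon> u s\<close> is an \<open>s\<close>-eigenvector, and one of the two signs keeps a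
  nonzero entry of \<open>u\<close>.\<close>
lemma s_eigenrow_exists:
  assumes "Pg S \<noteq> 0\<^sub>m n n"
  obtains \<epsilon> w i j where "\<epsilon> = 1 \<or> \<epsilon> = -1" "w \<in> carrier_mat n n" "w * Pg S = w" "w * A S = \<epsilon> \<cdot>\<^sub>m w"
    "i < n" "j < n" "w $$ (i, j) \<noteq> 0"
proof -
  obtain i j where i: "i < n" and j: "j < n" and ij: "Pg S $$ (i, j) \<noteq> 0"
    using nonzero_mat_entry[OF Pg_carrier assms] .
  define u where "u = mat n n (\<lambda>(r, s). if r = i \<and> s = i then (1::complex) else 0) * Pg S"
  have u: "u \<in> carrier_mat n n"
    by (simp add: u_def)
  have uS: "u * Pg S = u"
    by (simp add: u_def mult_assoc_n Pg_mult)
  have "(u + 1 \<cdot>\<^sub>m (u * A S)) $$ (i, j) + (u + (-1) \<cdot>\<^sub>m (u * A S)) $$ (i, j) = 2 * u $$ (i, j)"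
    using u i j by simp
  moreover have "u $$ (i, j) \<noteq> 0"
    using ij diag_unit_mult_entry[OF Pg_carrier i j] by (simp add: u_def)
  ultimately obtain \<epsilon> where eps: "\<epsilon> = 1 \<or> \<epsilon> = -1" and nz: "(u + \<epsilon> \<cdot>\<^sub>m (u * A S)) $$ (i, j) \<noteq> 0"
    by (metis add.right_neutral add_0 mult_eq_0_iff zero_neq_numeral)
  have "\<epsilon> * \<epsilon> = 1"
    using eps by auto
  then show thesis
    using that[OF eps _ s_average_row[OF u uS] i j nz] u by simp
qed

text \<open>The column \<open>Q\<close> is \<open>\<onehalf> (1 + \<epsilon> s) \<phi>\<^sub>s C\<close> for the matrix unit \<open>C = e\<^sub>j\<^sub>i / w\<^sub>i\<^sub>j\<close>; since \<open>\<phi>\<^sub>s\<close> fixes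
  \<open>w\<close> and \<open>s\<close> acts on it by \<open>\<epsilon>\<close>, this averaging does not change \<open>w C\<close>.\<close>
lemma s_eigencol_exists:
  assumes eps: "\<epsilon> = 1 \<or> \<epsilon> = -1" and w: "w \<in> carrier_mat n n" and wS: "w * Pg S = w"
    and ws: "w * A S = \<epsilon> \<cdot>\<^sub>m w" and i: "i < n" and j: "j < n" and wij: "w $$ (i, j) \<noteq> 0"
  obtains Q where "Q \<in> carrier_mat n n" "Pg S * Q = Q" "A S * Q = \<epsilon> \<cdot>\<^sub>m Q" "(w * Q) $$ (i, i) = 1"
proof -
  have e2: "\<epsilon> * \<epsilon> = 1"
    using eps by auto
  define C where "C = Pg S * mat n n (\<lambda>(r, s). if r = j \<and> s = i then 1 / w $$ (i, j) else 0)"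
  have C: "C \<in> carrier_mat n n" and SC: "Pg S * C = C"
    by (simp_all add: C_def Pg_mult_left)
  have wC: "(w * C) $$ (i, i) = 1"
    using w wS mult_scaled_unit_entry[OF w i j wij] by (simp add: C_def mult_assoc_n[symmetric])
  define Q where "Q = (1/2) \<cdot>\<^sub>m (C + \<epsilon> \<cdot>\<^sub>m (A S * C))"
  have Q: "Q \<in> carrier_mat n n"
    using C by (simp add: Q_def)
  have "w * (A S * C) = \<epsilon> \<cdot>\<^sub>m (w * C)"
    using w C by (simp add: mult_assoc_n[symmetric] ws smult_mult_n)
  then have "w * Q = (1/2) \<cdot>\<^sub>m (w * C + \<epsilon> \<cdot>\<^sub>m (\<epsilon> \<cdot>\<^sub>m (w * C)))"
    using w C by (simp add: Q_def mult_smult_n mult_add_n)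
  then have "(w * Q) $$ (i, i) = (1/2) * ((w * C) $$ (i, i) + \<epsilon> * (\<epsilon> * (w * C) $$ (i, i)))"
    using i w C by simp
  then have "(w * Q) $$ (i, i) = 1"
    using wC e2 by (simp add: mult.assoc[symmetric])
  then show thesis
    using that Q s_average_col[OF C SC e2] unfolding Q_def by blast
qed

lemma summand67_of_Pg_S_nonzero:
  assumes "Pg S \<noteq> 0\<^sub>m n n"
  obtains \<epsilon> F P where "\<epsilon> = 1 \<or> \<epsilon> = -1" "F \<in> carrier_mat 3 n" "P \<in> carrier_mat n 3" "F * P = 1\<^sub>m 3"
    "\<And>g h. phi_mat67 \<epsilon> g h * F = F * (Pg g * A h)" "\<And>g h. Pg g * A h * P = P * phi_mat67 \<epsilon> g h"
proof -
  obtain \<epsilon> w i j where eps: "\<epsilon> = 1 \<or> \<epsilon> = -1" and w: "w \<in> carrier_mat n n" and wS: "w * Pg S = w"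
    and ws: "w * A S = \<epsilon> \<cdot>\<^sub>m w" and i: "i < n" and j: "j < n" and wij: "w $$ (i, j) \<noteq> 0"
    using s_eigenrow_exists[OF assms] by blast
  obtain Q where Q: "Q \<in> carrier_mat n n" and QS: "Pg S * Q = Q" and Qs: "A S * Q = \<epsilon> \<cdot>\<^sub>m Q"
    and wQ: "(w * Q) $$ (i, i) = 1"
    using s_eigencol_exists[OF eps w wS ws i j wij] by blast
  show thesis
    using that[OF eps rows67_carrier cols67_carrier rows67_mult_cols67[OF w wS Q QS i wQ]]
      rows67_intertwines[OF w wS ws i] cols67_intertwines[OF Q QS Qs i] by blast
qed

end

section \<open>Inner faithful modules contain \<open>V\<^sub>6\<close> or \<open>V\<^sub>7\<close>\<close>

lemma rmod_dS3_mat_rep: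
  assumes rm: "rmod n act"
  shows "dS3_mat_rep n (\<lambda>h. act (group_elt h)) (\<lambda>g. act (basis_elt g E))"
proof
  note mult = rmod_mult[OF rm]
  show "act (group_elt h) * act (group_elt k) = act (group_elt (s3_mult h k))" for h k
    by (simp add: mult[symmetric] d_mult_group_elt)
  show "act (group_elt E) = 1\<^sub>m n"
    using rmod_unit[OF rm] by (simp add: d_unit_eq)
  show "act (basis_elt g E) * act (basis_elt g' E) = (if g = g' then act (basis_elt g E) else 0\<^sub>m n n)" for g g'
    by (simp add: mult[symmetric] d_mult_proj rmod_zero[OF rm])
  show "act (group_elt h) * act (basis_elt g E) =
      act (basis_elt (s3_mult (s3_mult h g) (s3_inv h)) E) * act (group_elt h)" for h g
    by (simp add: mult[symmetric] d_mult_group_elt_proj)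
qed (simp_all add: rmod_carrier[OF rm])

lemma inner_faithful_proj_S_nonzero:
  assumes rm: "rmod n act" and "inner_faithful n act"
  shows "act (basis_elt S E) \<noteq> 0\<^sub>m n n"
proof
  interpret dS3_mat_rep n "\<lambda>h. act (group_elt h)" "\<lambda>g. act (basis_elt g E)"
    by (rule rmod_dS3_mat_rep[OF rm])
  assume S0: "act (basis_elt S E) = 0\<^sub>m n n"
  have "act (basis_elt SR E) = 0\<^sub>m n n" "act (basis_elt SR2 E) = 0\<^sub>m n n"
    using Pg_conj[of R S] Pg_conj[of R2 S] S0 by simp_all
  then have proj0: "act proj_reflections = 0\<^sub>m n n"
    using S0 by (simp add: proj_reflections_def rmod_add[OF rm])
  obtain a where a: "a \<in> reflection_ideal" and nonzero: "act a \<noteq> 0\<^sub>m n n"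
    using \<open>inner_faithful n act\<close> hopf_ideal_reflection_ideal reflection_ideal_nonzero
    unfolding inner_faithful_def by blast
  have "act a = act proj_reflections * act a"
    using d_mult_proj_reflections[OF a] rmod_mult[OF rm, of proj_reflections a] by simp
  then show False
    using nonzero proj0 rmod_carrier[OF rm, of a] by simp
qed

lemma graded_act_basis_elt:
  assumes "\<And>a i j. i < 3 \<Longrightarrow> j < 3 \<Longrightarrow> V a $$ (i, j) = (\<Sum>h\<in>UNIV. a (grade67 i, h) * mono67 \<epsilon> h i j)"
    and "\<And>a. V a \<in> carrier_mat 3 3"
  shows "V (basis_elt g h) = phi_mat67 \<epsilon> g h"
proof (rule eq_matI)
  fix k k' assume "k < dim_row (phi_mat67 \<epsilon> g h)" "k' < dim_col (phi_mat67 \<epsilon> g h)"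
  then have k: "k < 3" "k' < 3"
    by (auto simp: phi_mat67_def)
  have "V (basis_elt g h) $$ (k, k') =
      (\<Sum>h'\<in>UNIV. (if h' = h then (if grade67 k = g then 1 else 0) else 0) * mono67 \<epsilon> h' k k')"
    using assms(1)[OF k] by (auto simp: basis_elt_def intro!: sum.cong)
  also have "\<dots> = phi_mat67 \<epsilon> g h $$ (k, k')"
    using k by (simp add: phi_mat67_def if_distrib[of "\<lambda>x. x * _"] sum.delta cong: if_cong)
  finally show "V (basis_elt g h) $$ (k, k') = phi_mat67 \<epsilon> g h $$ (k, k')" .
qed (use assms(2) in \<open>auto simp: phi_mat67_def\<close>)

lemma iso_to_summand_graded_act:
  assumes rm: "rmod n act" and V: "V = graded_act 3 gr T"
    and F: "F \<in> carrier_mat 3 n" and P: "P \<in> carrier_mat n 3" and FP: "F * P = 1\<^sub>m 3"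
    and VF: "\<And>g h. V (basis_elt g h) * F = F * act (basis_elt g h)"
    and PV: "\<And>g h. act (basis_elt g h) * P = P * V (basis_elt g h)"
  shows "iso_to_summand 3 V n act"
  unfolding iso_to_summand_def V
  using graded_act_intertwines_left[OF rm F VF[unfolded V]]
    graded_act_intertwines_right[OF rm P PV[unfolded V]] F P FP by blast

lemma inner_faithful_summand_V67:
  assumes rm: "rmod n act" and faithful: "inner_faithful n act"
  shows "iso_to_summand 3 V6 n act \<or> iso_to_summand 3 V7 n act"
proof -
  interpret dS3_mat_rep n "\<lambda>h. act (group_elt h)" "\<lambda>g. act (basis_elt g E)"
    by (rule rmod_dS3_mat_rep[OF rm])
  obtain \<epsilon> F P where eps: "\<epsilon> = 1 \<or> \<epsilon> = -1" and F: "F \<in> carrier_mat 3 n" and P: "P \<in> carrier_mat n 3"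
    and FP: "F * P = 1\<^sub>m 3"
    and VF: "\<And>g h. phi_mat67 \<epsilon> g h * F = F * (act (basis_elt g E) * act (group_elt h))"
    and PV: "\<And>g h. act (basis_elt g E) * act (group_elt h) * P = P * phi_mat67 \<epsilon> g h"
    using summand67_of_Pg_S_nonzero[OF inner_faithful_proj_S_nonzero[OF rm faithful]] by blast
  have basis: "act (basis_elt g E) * act (group_elt h) = act (basis_elt g h)" for g h
    using rmod_mult[OF rm, of "basis_elt g E" "group_elt h"] by (simp add: d_mult_proj_group_elt)
  have summand: "iso_to_summand 3 V n act"
    if V: "V = graded_act 3 grade67 T" and V_basis: "\<And>g h. V (basis_elt g h) = phi_mat67 \<epsilon> g h" for V T
    by (rule iso_to_summand_graded_act[OF rm V F P FP]) (simp_all add: V_basis basis VF PV[unfolded basis])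
  have V6_basis: "V6 (basis_elt g h) = phi_mat67 1 g h" for g h
    by (rule graded_act_basis_elt) (simp_all add: V6_entry V6_carrier)
  have V7_basis: "V7 (basis_elt g h) = phi_mat67 (-1) g h" for g h
    by (rule graded_act_basis_elt) (simp_all add: V7_entry V7_carrier)
  from eps show ?thesis
  proof
    assume "\<epsilon> = 1"
    then show ?thesis
      using summand[OF V6_def] V6_basis by simp
  next
    assume "\<epsilon> = -1"
    then show ?thesis
      using summand[OF V7_def] V7_basis by simp
  qed
qed

theorem mainTheorem17:
  fixes n :: nat and act :: "dS3 \<Rightarrow> complex mat"
  assumes "rmod n act"
  shows "inner_faithful n act \<longleftrightarrow> (iso_to_summand 3 V6 n act \<or> iso_to_summand 3 V7 n act)"
proof
  assume "inner_faithful n act"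
  then show "iso_to_summand 3 V6 n act \<or> iso_to_summand 3 V7 n act"
    by (rule inner_faithful_summand_V67[OF assms])
next
  assume "iso_to_summand 3 V6 n act \<or> iso_to_summand 3 V7 n act"
  then show "inner_faithful n act"
    using summand_V67_inner_faithful[OF V6_carrier V6_entry]
      summand_V67_inner_faithful[OF V7_carrier V7_entry] by auto
qed

end
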